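(* Let $g:\mathbb{N}\to\mathbb{C}$ be an arithmetic function and $f=\mathrm{id}\ast g$, i.e. $f(n)=\sum_{d\mid n} d\, g(n/d)$. Let $\delta\geq 0$ be a fixed constant and $(\kappa,\lambda)$ an exponent pair. For $x\ge1$ and $D\ge1$ define \[ \mathfrak{S}_{\delta}^{f}(x,D):=\sum_{D<d\leqslant 2D}\frac{f(d)}{d}\psi\left(\frac{x}{d+\delta}\right). \] (i) If $g(n)\ll 1$ for all $n\ge1$, then \[ \mathfrak{S}_{\delta}^{f}(x,D)\ll (x^\kappa D^{-\kappa+\lambda})^{1/(1+\kappa)} + x^\kappa D^{-2\kappa+\lambda}\log x + x^{-1}D^{2} \] uniformly for $1\leqslant D\leqslant x$. (ii) If for every $\varepsilon>0$ one has $g(n)\ll_\varepsilon n^\varepsilon$ for all $n\ge1$, then for every $\varepsilon>0$, \[ \mathfrak{S}_{\delta}^{f}(x,D)\ll D^\varepsilon\big((x^\kappa D^{-\kappa+\lambda})^{1/(1+\kappa)} + x^\kappa D^{-2\kappa+\lambda}\log x + x^{-1}D^{2}\big) \] uniformly for $1\leqslant D\leqslant x$.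
   Context: $\psi(t)=\{t\}-\tfrac12$, where $\{t\}$ is the fractional part of $t$; $e(t)=e^{2\pi i t}$; $\mathrm{id}(n)=n$ and $\ast$ is Dirichlet convolution. An exponent pair $(\kappa,\lambda)$ (in the sense of van der Corput / Graham–Kolesnik) is a pair with $0\le\kappa\le\tfrac12\le\lambda\le1$ such that for every sufficiently smooth real function $F$ on an interval $I\subset(N,2N]$ whose derivatives satisfy $|F^{(j)}(t)|\asymp T N^{-j}$ (for the required range of $j$, with $T>0$), one has $\sum_{n\in I} e(F(n))\ll (T/N)^{\kappa}N^{\lambda}+N/T$; e.g. $(1/2,1/2)$ is an exponent pair. Implied constants may depend on $\delta,\kappa,\lambda$, the implied constant in the bound for $g$, and (in (ii)) on $\varepsilon$. *)

theory Defs
  imports "HOL-Analysis.Analysis"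
begin

definition psi :: "real \<Rightarrow> real" where
  "psi t = frac t - 1/2"

definition ee :: "real \<Rightarrow> complex" where
  "ee t = exp (2 * of_real pi * \<i> * of_real t)"

definition id_conv :: "(nat \<Rightarrow> complex) \<Rightarrow> nat \<Rightarrow> complex" where
  "id_conv g n = (\<Sum>d\<in>{d. d dvd n}. of_nat d * g (n div d))"

text \<open>Exponent pair (van der Corput / Graham--Kolesnik): there is a number r of
  derivatives such that, for every constant A >= 1 in the size conditions
  T N^{-j}/A <= |F^(j)| <= A T N^{-j} (j = 1..r), the exponential sum over any
  subinterval (a,b] of (N,2N] is bounded by C ((T/N)^kappa N^lambda + N/T).
  Fd j is the j-th derivative of F = Fd 0.\<close>
definition exponent_pair :: "real \<Rightarrow> real \<Rightarrow> bool" where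
  "exponent_pair ka la \<longleftrightarrow>
     0 \<le> ka \<and> ka \<le> 1/2 \<and> 1/2 \<le> la \<and> la \<le> 1 \<and>
     (\<exists>r::nat. r \<ge> 1 \<and>
       (\<forall>A::real. A \<ge> 1 \<longrightarrow> (\<exists>C>0. \<forall>(N::real) (T::real) (a::real) (b::real) (Fd::nat \<Rightarrow> real \<Rightarrow> real).
          N \<ge> 1 \<longrightarrow> T > 0 \<longrightarrow> N \<le> a \<longrightarrow> a \<le> b \<longrightarrow> b \<le> 2 * N \<longrightarrow>
          (\<forall>j<r. \<forall>t\<in>{a..b}. (Fd j has_real_derivative Fd (Suc j) t) (at t)) \<longrightarrow>
          (\<forall>j\<in>{1..r}. \<forall>t\<in>{a..b}. T / N ^ j / A \<le> \<bar>Fd j t\<bar> \<and> \<bar>Fd j t\<bar> \<le> A * T / N ^ j) \<longrightarrow>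
          cmod (\<Sum>n\<in>{n::int. a < of_int n \<and> of_int n \<le> b}. ee (Fd 0 (of_int n)))
            \<le> C * ((T / N) powr ka * N powr la + N / T))))"

definition frakS :: "real \<Rightarrow> (nat \<Rightarrow> complex) \<Rightarrow> real \<Rightarrow> real \<Rightarrow> complex" where
  "frakS dl f x D = (\<Sum>d\<in>{d::nat. D < real d \<and> real d \<le> 2 * D}.
      f d / of_nat d * of_real (psi (x / (real d + dl))))"

end

theory Submission
  imports Defs
begin

(*
  Writing f(d)/d as the sum of g(m)/m over m n = d turns the sum into
  sum_{m <= 2D} g(m)/m * sum_{D < mn <= 2D} psi(x/(mn + delta)).  In each inner sum,
  psi is squeezed between difference quotients, with step 1/(2H), of its periodic
  primitive B_2({y})/2.  The Fourier series of B_2, obtained by Abel summation of the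
  logarithm series, turns the inner sum into the exponential sums
  sum_n e(h x/(mn + delta)) weighted by min(1/h, H/h^2); these are estimated with the
  exponent pair, since the phase t -> h x/(m t + delta) has derivatives of the size
  required there.  Choosing H optimally for each m and summing over m gives the
  bound; for kappa = 0 the sum over h contributes log H, whence the factor log x.
*)

section \<open>Fourier series of the periodic Bernoulli function\<close>

lemma ee_eq_cis: "ee t = cis (2 * pi * t)"
  by (simp add: ee_def cis_conv_exp mult_ac)

lemma ee_power: "ee t ^ n = ee (real n * t)"
  unfolding ee_eq_cis Complex.DeMoivre by (simp add: mult_ac)

lemma ee_add: "ee (a + b) = ee a * ee b"
  by (simp add: ee_def distrib_left exp_add)

lemma norm_ee: "cmod (ee t) = 1"
  by (simp add: ee_eq_cis)

lemma norm_ee_minus_one: "cmod (ee t - 1) = 2 * \<bar>sin (pi * t)\<bar>"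
proof -
  have "(cmod (ee t - 1))\<^sup>2 = (cos (2 * pi * t) - 1)\<^sup>2 + (sin (2 * pi * t))\<^sup>2"
    by (simp add: cmod_power2 ee_eq_cis)
  also have "\<dots> = 2 - 2 * cos (2 * (pi * t))"
    by (simp add: power2_eq_square algebra_simps)
  also have "\<dots> = (2 * \<bar>sin (pi * t)\<bar>)\<^sup>2"
    by (simp add: cos_double_sin power2_eq_square)
  finally show ?thesis
    by (metis abs_of_nonneg norm_ge_zero power2_eq_imp_eq abs_ge_zero mult_nonneg_nonneg zero_le_numeral)
qed

lemma norm_ee_minus_one_le: "cmod (ee t - 1) \<le> min 2 (2 * pi * \<bar>t\<bar>)"
  using abs_sin_le_one[of "pi * t"] abs_sin_x_le_abs_x[of "pi * t"]
  by (simp add: norm_ee_minus_one abs_mult)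

lemma sin_series_sums_Im_ln:
  assumes "0 \<le> r" "r < 1"
  shows "(\<lambda>n. r ^ Suc n * sin (2 * pi * real (Suc n) * t) / real (Suc n))
           sums (- Im (ln (1 - of_real r * ee t)))"
proof -
  have "cmod (- (of_real r * ee t)) < 1"
    using assms by (simp add: norm_mult norm_ee)
  from sums_Im[OF Ln_series'[OF this]]
  have "(\<lambda>n. Im (- ((of_real r * ee t) ^ n) / of_nat n)) sums Im (ln (1 - of_real r * ee t))"
    by simp
  then have "(\<lambda>n. - (r ^ n * sin (2 * pi * real n * t) / real n)) sums Im (ln (1 - of_real r * ee t))"
    by (simp only: power_mult_distrib ee_power) (simp add: ee_eq_cis mult_ac Im_divide_of_nat)
  then have "(\<lambda>n. r ^ n * sin (2 * pi * real n * t) / real n) sums (- Im (ln (1 - of_real r * ee t)))"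
    using sums_minus by fastforce
  then show ?thesis
    by (subst sums_Suc_iff) simp
qed

text \<open>Abel means of the cosine series \<open>\<Sum> cos(2\<pi>nt)/n\<^sup>2\<close>, whose value at \<open>r = 1\<close> is wanted.\<close>

definition abel_cos_series :: "real \<Rightarrow> real \<Rightarrow> real" where
  "abel_cos_series r t = (\<Sum>n. r ^ Suc n * cos (2 * pi * real (Suc n) * t) / (real (Suc n))\<^sup>2)"

lemma summable_inverse_squares: "summable (\<lambda>n. 1 / (real (Suc n))\<^sup>2)"
  using inverse_squares_sums by (simp add: sums_iff)

lemma abel_cos_series_term_le:
  assumes "0 \<le> r" "r \<le> 1"
  shows "norm (r ^ Suc n * cos (2 * pi * real (Suc n) * t) / (real (Suc n))\<^sup>2) \<le> 1 / (real (Suc n))\<^sup>2"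
proof -
  have "\<bar>r ^ Suc n * cos (2 * pi * real (Suc n) * t)\<bar> \<le> 1"
    using assms abs_cos_le_one by (simp add: abs_mult power_le_one mult_le_one del: power_Suc)
  then show ?thesis
    by (simp add: divide_right_mono del: power_Suc of_nat_Suc)
qed

lemma abel_cos_series_sums:
  assumes "0 \<le> r" "r \<le> 1"
  shows "(\<lambda>n. r ^ Suc n * cos (2 * pi * real (Suc n) * t) / (real (Suc n))\<^sup>2) sums abel_cos_series r t"
  unfolding abel_cos_series_def
  by (intro summable_sums summable_comparison_test'[OF summable_inverse_squares, of 0]
        abel_cos_series_term_le assms)

lemma abel_cos_series_has_derivative:
  assumes "0 \<le> r" "r < 1"
  shows "(abel_cos_series r has_real_derivative 2 * pi * Im (ln (1 - of_real r * ee t))) (at t)"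
proof -
  define f where "f n t = r ^ Suc n * cos (2 * pi * real (Suc n) * t) / (real (Suc n))\<^sup>2" for n t
  define f' where "f' n t = - (2 * pi) * (r ^ Suc n * sin (2 * pi * real (Suc n) * t) / real (Suc n))"
    for n t
  have der: "(f n has_field_derivative f' n t) (at t within UNIV)" for n t
  proof -
    have "((\<lambda>t. cos (2 * pi * real (Suc n) * t)) has_real_derivative
            - sin (2 * pi * real (Suc n) * t) * (2 * pi * real (Suc n))) (at t)"
      by (auto intro!: derivative_eq_intros)
    from DERIV_cmult[OF this, of "r ^ Suc n / (real (Suc n))\<^sup>2"] show ?thesis
      unfolding f_def f'_def by (simp add: power2_eq_square field_simps del: power_Suc of_nat_Suc)
  qed
  have f'_le: "norm (f' n t) \<le> 2 * pi * r ^ Suc n" for n t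
  proof -
    have "\<bar>sin (2 * pi * real (Suc n) * t)\<bar> \<le> real (Suc n)"
      by (rule order_trans[OF abs_sin_le_one]) simp
    then have "\<bar>sin (2 * pi * real (Suc n) * t)\<bar> / real (Suc n) \<le> 1"
      by (simp add: divide_le_eq del: of_nat_Suc)
    from mult_left_mono[OF this, of "2 * pi * r ^ Suc n"] show ?thesis
      using assms by (simp add: f'_def abs_mult del: power_Suc of_nat_Suc)
  qed
  have "summable (\<lambda>n. 2 * pi * r ^ Suc n)"
    using assms by (intro summable_mult summable_ignore_initial_segment[where k = 1, simplified]) auto
  then have unif: "uniform_limit UNIV (\<lambda>n x. \<Sum>i<n. f' i x) (\<lambda>x. \<Sum>i. f' i x) sequentially"
    by (rule Weierstrass_m_test[rotated]) (use f'_le in auto)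
  have "summable (\<lambda>n. f n 0)"
    using abel_cos_series_sums[of r 0] assms unfolding f_def by (simp add: sums_iff)
  then obtain G where G: "\<And>x. (\<lambda>n. f n x) sums G x"
    "\<And>x. (G has_field_derivative (\<Sum>i. f' i x)) (at x within UNIV)"
    using has_field_derivative_series[OF convex_UNIV der unif, of 0] by blast
  have "abel_cos_series r = G"
    using G(1) by (auto simp: fun_eq_iff abel_cos_series_def f_def sums_iff)
  moreover have "(\<Sum>i. f' i t) = 2 * pi * Im (ln (1 - of_real r * ee t))"
    using sums_mult[OF sin_series_sums_Im_ln[OF assms, of t], of "- (2 * pi)"]
    by (simp add: f'_def sums_iff)
  ultimately show ?thesis
    using G(2)[of t] by simp
qed

lemma abel_cos_series_diff_has_integral:
  assumes "0 \<le> r" "r < 1" "0 \<le> t"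
  shows "((\<lambda>u. 2 * pi * Im (ln (1 - of_real r * ee u))) has_integral
           abel_cos_series r t - abel_cos_series r 0) {0..t}"
  using abel_cos_series_has_derivative[OF assms(1,2)]
  by (intro fundamental_theorem_of_calculus[OF assms(3)])
     (auto simp: has_real_derivative_iff_has_vector_derivative[symmetric]
           intro: has_field_derivative_at_within)

lemma abel_cos_series_tendsto:
  assumes "r \<longlonglongrightarrow> 1" "\<And>k. 0 \<le> r k" "\<And>k. r k \<le> 1"
  shows "(\<lambda>k. abel_cos_series (r k) t) \<longlonglongrightarrow> abel_cos_series 1 t"
proof -
  have "(\<lambda>k. \<Sum>n. r k ^ Suc n * cos (2 * pi * real (Suc n) * t) / (real (Suc n))\<^sup>2) \<longlonglongrightarrow>
        (\<Sum>n. 1 ^ Suc n * cos (2 * pi * real (Suc n) * t) / (real (Suc n))\<^sup>2)"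
    using assms abel_cos_series_term_le
    by (intro conjunct2[OF conjunct2[OF tannerys_theorem[OF _ _ summable_inverse_squares]]]
          tendsto_intros always_eventually) auto
  then show ?thesis
    unfolding abel_cos_series_def by simp
qed

lemma Im_ln_one_minus_ee:
  assumes "0 < u" "u < 1"
  shows "Im (ln (1 - ee u)) = pi * u - pi / 2"
proof -
  have "1 - ee u = rcis (2 * sin (pi * u)) (pi * u - pi / 2)"
    using cos_double_sin[of "pi * u"] sin_double[of "pi * u"]
    by (intro complex_eqI) (simp_all add: ee_eq_cis rcis_def cos_diff sin_diff power2_eq_square mult_ac)
  moreover have "sin (pi * u) > 0"
    using assms by (intro sin_gt_zero) auto
  moreover have "0 < pi * u" "pi * u < pi"
    using assms mult_strict_left_mono[of u 1 pi] by simp_all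
  then have "pi * u - pi / 2 \<in> {-pi<..pi}"
    unfolding greaterThanAtMost_iff using pi_gt_zero by linarith
  ultimately show ?thesis
    using Ln_rcis[of "2 * sin (pi * u)" "pi * u - pi / 2"] by simp
qed

lemma Re_one_minus_ee_pos:
  assumes "0 \<le> r" "r < 1"
  shows "Re (1 - of_real r * ee u) > 0"
  using assms mult_left_le[OF cos_le_one[of "2 * pi * u"], of r] by (simp add: ee_eq_cis)

lemma abs_Im_ln_one_minus_ee_le:
  assumes "0 \<le> r" "r < 1"
  shows "\<bar>Im (ln (1 - of_real r * ee u))\<bar> \<le> pi"
proof -
  have "1 - of_real r * ee u \<noteq> 0"
    using Re_one_minus_ee_pos[OF assms, of u] by force
  then show ?thesis
    using mpi_less_Im_Ln Im_Ln_le_pi by (smt (verit))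
qed

lemma Im_ln_one_minus_ee_tendsto:
  assumes "r \<longlonglongrightarrow> 1" "0 < u" "u < 1"
  shows "(\<lambda>k. Im (ln (1 - of_real (r k) * ee u))) \<longlonglongrightarrow> pi * u - pi / 2"
proof -
  have "sin (pi * u) > 0"
    using assms by (intro sin_gt_zero) auto
  then have "Re (1 - ee u) > 0"
    using cos_double_sin[of "pi * u"] by (simp add: ee_eq_cis mult_ac)
  then have "isCont ln (1 - ee u)"
    by (intro continuous_at_Ln) (auto simp: complex_nonpos_Reals_iff)
  moreover have "(\<lambda>k. 1 - of_real (r k) * ee u) \<longlonglongrightarrow> 1 - of_real 1 * ee u"
    by (intro tendsto_intros assms(1))
  ultimately have "(\<lambda>k. ln (1 - of_real (r k) * ee u)) \<longlonglongrightarrow> ln (1 - ee u)"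
    using isCont_tendsto_compose by fastforce
  then show ?thesis
    using Im_ln_one_minus_ee[OF assms(2,3)] by (metis tendsto_Im)
qed

lemma integral_Im_ln_one_minus_ee_tendsto:
  assumes r: "r \<longlonglongrightarrow> 1" "\<And>k. 0 \<le> r k" "\<And>k. r k < 1" and t: "0 \<le> t" "t < 1"
  shows "(\<lambda>k. integral {0..t} (\<lambda>u. 2 * pi * Im (ln (1 - of_real (r k) * ee u))))
           \<longlonglongrightarrow> pi\<^sup>2 * t\<^sup>2 - pi\<^sup>2 * t"
proof -
  define f where "f = (\<lambda>k u. 2 * pi * Im (ln (1 - of_real (r k) * ee u)))"
  define h where "h u = (if u = 0 then 0 else 2 * pi * (pi * u - pi / 2))" for u
  have "f k integrable_on {0..t}" for k
    unfolding f_def using abel_cos_series_diff_has_integral r t by blast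
  moreover have "norm (f k u) \<le> 2 * pi * pi" for k u
    using abs_Im_ln_one_minus_ee_le[OF r(2,3)] by (simp add: f_def abs_mult)
  moreover have "(\<lambda>k. f k u) \<longlonglongrightarrow> h u" if "u \<in> {0..t}" for u
  proof (cases "u = 0")
    case True
    have "Im (ln (1 - of_real (r k))) = 0" for k
      using Ln_of_real[of "1 - r k"] r(3)[of k] by simp
    with True show ?thesis
      by (simp add: f_def h_def ee_def)
  next
    case False
    with that t have "(\<lambda>k. f k u) \<longlonglongrightarrow> 2 * pi * (pi * u - pi / 2)"
      unfolding f_def by (intro tendsto_mult_left Im_ln_one_minus_ee_tendsto r(1)) auto
    with False show ?thesis
      by (simp add: h_def)
  qed
  ultimately have "(\<lambda>k. integral {0..t} (f k)) \<longlonglongrightarrow> integral {0..t} h"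
    by (intro dominated_convergence(2)[where h = "\<lambda>_. 2 * pi * pi"]) auto
  moreover have "((\<lambda>u. 2 * pi * (pi * u - pi / 2)) has_integral pi\<^sup>2 * t\<^sup>2 - pi\<^sup>2 * t) {0..t}"
  proof -
    have "((\<lambda>u. pi\<^sup>2 * u\<^sup>2 - pi\<^sup>2 * u) has_real_derivative 2 * pi * (pi * u - pi / 2))
            (at u within {0..t})" for u
      by (auto intro!: derivative_eq_intros simp: power2_eq_square algebra_simps)
    with fundamental_theorem_of_calculus[OF t(1), of "\<lambda>u. pi\<^sup>2 * u\<^sup>2 - pi\<^sup>2 * u"] show ?thesis
      by (simp add: has_real_derivative_iff_has_vector_derivative)
  qed
  then have "(h has_integral pi\<^sup>2 * t\<^sup>2 - pi\<^sup>2 * t) {0..t}"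
    by (rule has_integral_spike_finite[of "{0}", rotated 2]) (auto simp: h_def)
  ultimately have "(\<lambda>k. integral {0..t} (f k)) \<longlonglongrightarrow> pi\<^sup>2 * t\<^sup>2 - pi\<^sup>2 * t"
    by (simp add: integral_unique)
  then show ?thesis
    by (simp only: f_def)
qed

text \<open>The \<open>t\<close>-derivative of the Abel mean is \<open>2\<pi> Im ln(1 - r e(t))\<close>, which tends to
  \<open>2\<pi>(\<pi>t - \<pi>/2)\<close> as \<open>r \<rightarrow> 1\<close>; integrating evaluates the series.\<close>

lemma abel_cos_series_one:
  assumes "0 \<le> t" "t < 1"
  shows "abel_cos_series 1 t = pi\<^sup>2 * (t\<^sup>2 - t + 1 / 6)"
proof -
  define r where "r k = 1 - inverse (real (Suc k)) / 2" for k
  have r: "0 \<le> r k" "r k < 1" for k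
    by (auto simp: r_def field_simps)
  have "(\<lambda>k. 1 - inverse (real (Suc k)) / 2) \<longlonglongrightarrow> 1 - 0 / 2"
    by (intro tendsto_intros LIMSEQ_inverse_real_of_nat) auto
  then have r_lim: "r \<longlonglongrightarrow> 1"
    by (simp add: r_def[abs_def])
  have "(\<lambda>k. abel_cos_series (r k) t - abel_cos_series (r k) 0)
          \<longlonglongrightarrow> abel_cos_series 1 t - abel_cos_series 1 0"
    using r by (intro tendsto_intros abel_cos_series_tendsto r_lim) (auto simp: less_imp_le)
  moreover have "(\<lambda>k. abel_cos_series (r k) t - abel_cos_series (r k) 0) \<longlonglongrightarrow> pi\<^sup>2 * t\<^sup>2 - pi\<^sup>2 * t"
    using integral_Im_ln_one_minus_ee_tendsto[OF r_lim r assms]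
      integral_unique[OF abel_cos_series_diff_has_integral[OF r assms(1)]] by simp
  ultimately have "abel_cos_series 1 t - abel_cos_series 1 0 = pi\<^sup>2 * t\<^sup>2 - pi\<^sup>2 * t"
    by (rule LIMSEQ_unique)
  moreover have "abel_cos_series 1 0 = pi\<^sup>2 / 6"
    using inverse_squares_sums by (simp add: abel_cos_series_def sums_iff)
  ultimately show ?thesis
    by (simp add: algebra_simps)
qed

text \<open>\<open>psi_primitive y = B\<^sub>2({y})/2\<close> is the periodic primitive of \<open>psi\<close> with mean zero.\<close>

definition psi_primitive :: "real \<Rightarrow> real" where
  "psi_primitive y = ((frac y)\<^sup>2 - frac y) / 2 + 1 / 12"

lemma cos_2pi_mult_frac: "cos (2 * pi * real k * frac y) = cos (2 * pi * real k * y)"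
proof -
  have "2 * pi * real k * y = 2 * pi * real k * frac y + 2 * pi * of_int (int k * \<lfloor>y\<rfloor>)"
    by (simp add: frac_def algebra_simps)
  then show ?thesis
    using sin_cos_eq_iff by metis
qed

lemma psi_primitive_sums:
  "(\<lambda>n. cos (2 * pi * real (Suc n) * y) / (2 * pi\<^sup>2 * (real (Suc n))\<^sup>2)) sums psi_primitive y"
proof -
  have "(\<lambda>n. cos (2 * pi * real (Suc n) * frac y) / (real (Suc n))\<^sup>2)
          sums (pi\<^sup>2 * ((frac y)\<^sup>2 - frac y + 1 / 6))"
    using abel_cos_series_sums[of 1 "frac y"] abel_cos_series_one[of "frac y"]
    by (simp add: frac_lt_1)
  then have "(\<lambda>n. cos (2 * pi * real (Suc n) * y) / (real (Suc n))\<^sup>2 / (2 * pi\<^sup>2))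
               sums (pi\<^sup>2 * ((frac y)\<^sup>2 - frac y + 1 / 6) / (2 * pi\<^sup>2))"
    unfolding cos_2pi_mult_frac by (rule sums_divide)
  moreover have "pi\<^sup>2 * ((frac y)\<^sup>2 - frac y + 1 / 6) / (2 * pi\<^sup>2) = psi_primitive y"
    by (simp add: psi_primitive_def field_simps)
  ultimately show ?thesis
    by (simp add: mult_ac)
qed

lemma psi_ge_diff_quotient:
  assumes "0 < dl" "dl < 1"
  shows "psi y \<ge> (psi_primitive (y + dl) - psi_primitive y) / dl - dl / 2"
proof -
  define s where "s = frac y"
  have s: "0 \<le> s" "s < 1" "y - s \<in> \<int>"
    unfolding s_def by (simp_all add: frac_lt_1) (simp add: frac_def)
  show ?thesis
  proof (cases "s + dl < 1")
    case True
    then have fr: "frac (y + dl) = s + dl"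
      using s assms by (subst frac_unique_iff) (auto simp: algebra_simps)
    then show ?thesis
      unfolding psi_primitive_def psi_def s_def[symmetric] fr using assms
      by (simp add: field_simps power2_eq_square)
  next
    case False
    have "y + dl - (s + dl - 1) \<in> \<int>"
      using s(3) by (metis Ints_1 Ints_add add_diff_cancel_left' add_diff_eq diff_diff_eq2)
    then have fr: "frac (y + dl) = s + dl - 1"
      using s False assms by (subst frac_unique_iff) auto
    then have "(psi_primitive (y + dl) - psi_primitive y) / dl = s + dl / 2 - 1 / 2 + (1 - s - dl) / dl"
      unfolding psi_primitive_def s_def[symmetric] fr using assms by (simp add: field_simps power2_eq_square)
    moreover have "(1 - s - dl) / dl \<le> 0"
      using False assms by (simp add: divide_nonpos_pos)
    ultimately show ?thesis
      by (simp add: psi_def s_def)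
  qed
qed

lemma psi_le_diff_quotient:
  assumes "0 < dl" "dl < 1"
  shows "psi y \<le> (psi_primitive y - psi_primitive (y - dl)) / dl + dl / 2"
proof -
  define s where "s = frac y"
  have s: "0 \<le> s" "s < 1" "y - s \<in> \<int>"
    unfolding s_def by (simp_all add: frac_lt_1) (simp add: frac_def)
  show ?thesis
  proof (cases "s \<ge> dl")
    case True
    then have fr: "frac (y - dl) = s - dl"
      using s assms by (subst frac_unique_iff) (auto simp: algebra_simps)
    then show ?thesis
      unfolding psi_primitive_def psi_def s_def[symmetric] fr using assms
      by (simp add: field_simps power2_eq_square)
  next
    case False
    have "y - dl - (s - dl + 1) \<in> \<int>"
      using s(3) by (metis Ints_1 Ints_diff diff_diff_eq diff_add_cancel add_diff_eq diff_diff_eq2)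
    then have fr: "frac (y - dl) = s - dl + 1"
      using s False assms by (subst frac_unique_iff) auto
    then have "(psi_primitive y - psi_primitive (y - dl)) / dl = s - dl / 2 - 1 / 2 + (1 - s / dl)"
      unfolding psi_primitive_def s_def[symmetric] fr using assms by (simp add: field_simps power2_eq_square)
    moreover have "1 - s / dl \<ge> 0"
      using False assms by (simp add: field_simps)
    ultimately show ?thesis
      by (simp add: psi_def s_def)
  qed
qed

section \<open>Smoothing of sums of psi\<close>

definition exp_sum :: "'a set \<Rightarrow> ('a \<Rightarrow> real) \<Rightarrow> nat \<Rightarrow> complex" where
  "exp_sum J y k = (\<Sum>j\<in>J. ee (real k * y j))"

definition fourier_weight :: "real \<Rightarrow> nat \<Rightarrow> real" where
  "fourier_weight dl k = min (1 / (pi * real k)) (1 / (pi\<^sup>2 * (real k)\<^sup>2 * dl))"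

lemma norm_exp_sum_le_card: "cmod (exp_sum J y k) \<le> card J"
  unfolding exp_sum_def using norm_sum[of "\<lambda>j. ee (real k * y j)" J] by (simp add: norm_ee)

lemma fourier_weight_nonneg: "0 \<le> dl \<Longrightarrow> 0 \<le> fourier_weight dl k"
  by (simp add: fourier_weight_def)

lemma summable_fourier_weight_exp_sum:
  assumes "0 < dl"
  shows "summable (\<lambda>n. fourier_weight dl (Suc n) * cmod (exp_sum J y (Suc n)))"
proof (rule summable_comparison_test'[of "\<lambda>n. card J / (pi\<^sup>2 * dl) * (1 / (real (Suc n))\<^sup>2)" 0])
  show "summable (\<lambda>n. card J / (pi\<^sup>2 * dl) * (1 / (real (Suc n))\<^sup>2))"
    by (intro summable_mult summable_inverse_squares)
  fix n :: nat
  have "fourier_weight dl (Suc n) * cmod (exp_sum J y (Suc n)) \<le> 1 / (pi\<^sup>2 * (real (Suc n))\<^sup>2 * dl) * card J"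
    using norm_exp_sum_le_card fourier_weight_nonneg assms
    by (intro mult_mono) (auto simp: fourier_weight_def)
  then show "norm (fourier_weight dl (Suc n) * cmod (exp_sum J y (Suc n)))
               \<le> card J / (pi\<^sup>2 * dl) * (1 / (real (Suc n))\<^sup>2)"
    using fourier_weight_nonneg[of dl "Suc n"] assms by (simp add: abs_mult field_simps)
qed

text \<open>The two bounds \<open>\<bar>e(k\<sigma>) - 1\<bar> \<le> 2\<close> and \<open>\<bar>e(k\<sigma>) - 1\<bar> \<le> 2\<pi>k\<delta>\<close> give the two
  branches of the weight.\<close>

lemma ee_increment_le_fourier_weight:
  assumes "0 < dl" "\<bar>sg\<bar> \<le> dl" "1 \<le> k"
  shows "cmod (ee (real k * sg) - 1) / (2 * pi\<^sup>2 * (real k)\<^sup>2) \<le> dl * fourier_weight dl k"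
proof -
  define E where "E = cmod (ee (real k * sg) - 1)"
  have "E \<le> 2 * pi * (real k * \<bar>sg\<bar>)"
    using norm_ee_minus_one_le[of "real k * sg"] by (simp add: E_def abs_mult)
  also have "\<dots> \<le> 2 * pi * (real k * dl)"
    using assms by (intro mult_left_mono) auto
  finally have "E \<le> 2 * pi * (real k * dl)" .
  then have "E / (2 * pi\<^sup>2 * (real k)\<^sup>2) \<le> dl * (1 / (pi * real k))"
    using assms by (simp add: field_simps power2_eq_square)
  moreover have "E \<le> 2"
    using norm_ee_minus_one_le[of "real k * sg"] by (simp add: E_def)
  then have "E / (2 * pi\<^sup>2 * (real k)\<^sup>2) \<le> dl * (1 / (pi\<^sup>2 * (real k)\<^sup>2 * dl))"
    using assms by (simp add: field_simps power2_eq_square)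
  ultimately show ?thesis
    using assms(1) by (simp add: E_def fourier_weight_def min_mult_distrib_left del: divide_const_simps)
qed

lemma abs_sum_psi_primitive_shift_le:
  assumes "0 < dl" "\<bar>sg\<bar> \<le> dl"
  shows "\<bar>\<Sum>j\<in>J. psi_primitive (y j + sg) - psi_primitive (y j)\<bar>
           \<le> dl * (\<Sum>n. fourier_weight dl (Suc n) * cmod (exp_sum J y (Suc n)))"
proof -
  define T where "T n = Re ((ee (real (Suc n) * sg) - 1) * exp_sum J y (Suc n)) / (2 * pi\<^sup>2 * (real (Suc n))\<^sup>2)"
    for n
  define c where "c n y = cos (2 * pi * real (Suc n) * y) / (2 * pi\<^sup>2 * (real (Suc n))\<^sup>2)" for n y
  have "(\<lambda>n. \<Sum>j\<in>J. c n (y j + sg) - c n (y j)) sums (\<Sum>j\<in>J. psi_primitive (y j + sg) - psi_primitive (y j))"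
    unfolding c_def by (intro sums_sum sums_diff psi_primitive_sums)
  moreover have "(\<Sum>j\<in>J. c n (y j + sg) - c n (y j)) = T n" for n
  proof -
    have "Re ((ee (real (Suc n) * sg) - 1) * exp_sum J y (Suc n))
        = (\<Sum>j\<in>J. Re (ee (real (Suc n) * sg + real (Suc n) * y j) - ee (real (Suc n) * y j)))"
      unfolding exp_sum_def sum_distrib_left Re_sum ee_add by (simp add: algebra_simps)
    then show ?thesis
      by (simp add: T_def c_def ee_eq_cis algebra_simps sum_divide_distrib diff_divide_distrib)
  qed
  ultimately have T_sums: "T sums (\<Sum>j\<in>J. psi_primitive (y j + sg) - psi_primitive (y j))"
    by simp
  have T_le: "norm (T n) \<le> dl * (fourier_weight dl (Suc n) * cmod (exp_sum J y (Suc n)))" for n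
  proof -
    have "norm (T n) \<le> cmod (ee (real (Suc n) * sg) - 1) / (2 * pi\<^sup>2 * (real (Suc n))\<^sup>2)
                         * cmod (exp_sum J y (Suc n))"
      using abs_Re_le_cmod[of "(ee (real (Suc n) * sg) - 1) * exp_sum J y (Suc n)"]
      by (simp add: T_def abs_divide divide_right_mono norm_mult)
    also have "\<dots> \<le> dl * fourier_weight dl (Suc n) * cmod (exp_sum J y (Suc n))"
      using assms by (intro mult_right_mono ee_increment_le_fourier_weight) auto
    finally show ?thesis
      by (simp add: mult_ac)
  qed
  have summable: "summable (\<lambda>n. dl * (fourier_weight dl (Suc n) * cmod (exp_sum J y (Suc n))))"
    by (intro summable_mult summable_fourier_weight_exp_sum assms(1))
  have "\<bar>\<Sum>j\<in>J. psi_primitive (y j + sg) - psi_primitive (y j)\<bar> = norm (\<Sum>n. T n)"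
    using T_sums by (simp add: sums_iff)
  also have "\<dots> \<le> (\<Sum>n. dl * (fourier_weight dl (Suc n) * cmod (exp_sum J y (Suc n))))"
    using T_le summable by (intro norm_suminf_le) auto
  also have "\<dots> = dl * (\<Sum>n. fourier_weight dl (Suc n) * cmod (exp_sum J y (Suc n)))"
    by (intro suminf_mult summable_fourier_weight_exp_sum assms(1))
  finally show ?thesis .
qed

lemma abs_sum_psi_le_exp_sums:
  fixes dl :: real
  assumes "0 < dl" "dl < 1"
  shows "\<bar>\<Sum>j\<in>J. psi (y j)\<bar>
           \<le> real (card J) * dl / 2 + (\<Sum>n. fourier_weight dl (Suc n) * cmod (exp_sum J y (Suc n)))"
proof -
  define B where "B = (\<Sum>n. fourier_weight dl (Suc n) * cmod (exp_sum J y (Suc n)))"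
  have "\<bar>\<Sum>j\<in>J. psi_primitive (y j + sg) - psi_primitive (y j)\<bar> / dl \<le> B" if "\<bar>sg\<bar> \<le> dl" for sg
    using abs_sum_psi_primitive_shift_le[OF assms(1) that] assms by (simp add: B_def field_simps)
  from this[of dl] this[of "- dl"]
  have "\<bar>(\<Sum>j\<in>J. psi_primitive (y j + dl) - psi_primitive (y j)) / dl\<bar> \<le> B"
    "\<bar>(\<Sum>j\<in>J. psi_primitive (y j) - psi_primitive (y j - dl)) / dl\<bar> \<le> B"
    using assms by (simp_all add: sum_subtractf abs_minus_commute)
  moreover have "(\<Sum>j\<in>J. (psi_primitive (y j + dl) - psi_primitive (y j)) / dl - dl / 2) \<le> (\<Sum>j\<in>J. psi (y j))"
    by (intro sum_mono psi_ge_diff_quotient assms)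
  moreover have "(\<Sum>j\<in>J. psi (y j)) \<le> (\<Sum>j\<in>J. (psi_primitive (y j) - psi_primitive (y j - dl)) / dl + dl / 2)"
    by (intro sum_mono psi_le_diff_quotient assms)
  ultimately show ?thesis
    unfolding B_def[symmetric] sum.distrib sum_subtractf sum_divide_distrib[symmetric] abs_le_iff
    by simp
qed

section \<open>Power sums and the Fourier weights\<close>

lemma powr_diff_mvt:
  fixes j a :: real
  assumes "1 < j" "a \<le> 1"
  obtains z where "j powr a - (j - 1) powr a = a * z powr (a - 1)" "j powr (a - 1) \<le> z powr (a - 1)"
proof -
  have "\<exists>z. j - 1 < z \<and> z < j \<and> j powr a - (j - 1) powr a = (j - (j - 1)) * (a * z powr (a - 1))"
    by (rule MVT2) (use assms in \<open>auto intro!: has_real_derivative_powr\<close>)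
  then obtain z where z: "j - 1 < z" "z < j" "j powr a - (j - 1) powr a = a * z powr (a - 1)"
    by auto
  moreover have "j powr (a - 1) \<le> z powr (a - 1)"
    using z assms by (intro powr_mono2') auto
  ultimately show ?thesis
    using that by blast
qed

lemma powr_diff_ge_deriv:
  fixes j a :: real
  assumes "1 < j" "0 \<le> a" "a \<le> 1"
  shows "a * j powr (a - 1) \<le> j powr a - (j - 1) powr a"
  using assms by (metis powr_diff_mvt mult_left_mono)

lemma powr_diff_le_deriv:
  fixes j a :: real
  assumes "1 < j" "a \<le> 0"
  shows "j powr a - (j - 1) powr a \<le> a * j powr (a - 1)"
  using assms by (metis powr_diff_mvt mult_left_mono_neg order.trans zero_le_one)

lemma sum_powr_le:
  fixes a :: real
  assumes "0 < a" "a \<le> 1"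
  shows "(\<Sum>n<H. real (Suc n) powr (a - 1)) \<le> real H powr a / a"
proof (induction H)
  case (Suc H)
  have "a * real (Suc H) powr (a - 1) \<le> real (Suc H) powr a - real H powr a"
    using powr_diff_ge_deriv[of "real (Suc H)" a] assms by (cases "H = 0") auto
  with Suc.IH assms show ?case
    by (simp add: field_simps)
qed simp

lemma harm_le_one_plus_ln:
  assumes "1 \<le> n"
  shows "(harm n :: real) \<le> 1 + ln (real n)"
  using euler_mascheroni_sequence_decreasing[of 1 n] assms by (simp add: harm_def)

lemma powr_tail_sums_le:
  fixes s :: real
  assumes "0 < s" "1 \<le> H"
  shows "summable (\<lambda>n. real (n + H + 1) powr (- 1 - s))"
    "(\<Sum>n. real (n + H + 1) powr (- 1 - s)) \<le> real H powr (- s) / s"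
proof -
  define f where "f n = real (n + H) powr (- s) / s" for n
  have "filterlim (\<lambda>n. real (n + H)) at_top sequentially"
    by (intro filterlim_compose[OF filterlim_real_sequentially] filterlim_add_const_nat_at_top)
  then have "f \<longlonglongrightarrow> 0"
    unfolding f_def using assms by (intro tendsto_divide_zero tendsto_neg_powr) auto
  then have telescope: "(\<lambda>n. f n - f (Suc n)) sums f 0"
    using telescope_sums'[of f 0] by simp
  have le: "norm (real (n + H + 1) powr (- 1 - s)) \<le> f n - f (Suc n)" for n
  proof -
    have e: "- s - 1 = - 1 - s"
      by simp
    have "real (n + H + 1) powr (- s) - (real (n + H + 1) - 1) powr (- s)
            \<le> - s * real (n + H + 1) powr (- 1 - s)"
      using powr_diff_le_deriv[of "real (n + H + 1)" "- s", unfolded e] assms by simp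
    then show ?thesis
      using assms by (simp add: f_def field_simps diff_divide_distrib[symmetric])
  qed
  show summable: "summable (\<lambda>n. real (n + H + 1) powr (- 1 - s))"
    by (rule summable_comparison_test'[OF sums_summable[OF telescope] le])
  have "(\<Sum>n. real (n + H + 1) powr (- 1 - s)) \<le> (\<Sum>n. f n - f (Suc n))"
    using le by (intro suminf_le summable sums_summable[OF telescope]) auto
  also have "\<dots> = f 0"
    using telescope by (simp add: sums_iff)
  finally show "(\<Sum>n. real (n + H + 1) powr (- 1 - s)) \<le> real H powr (- s) / s"
    by (simp add: f_def)
qed

lemma sum_powr_neg_le:
  fixes s :: real
  assumes "0 < s"
  shows "(\<Sum>m = 1..M. real m powr (- 1 - s)) \<le> 1 + 1 / s"
proof -
  define f where "f n = real (Suc n) powr (- 1 - s)" for n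
  have tail: "summable (\<lambda>n. f (Suc n))" "(\<Sum>n. f (Suc n)) \<le> 1 / s"
    using powr_tail_sums_le[OF assms order.refl] by (simp_all add: f_def add_ac)
  then have "summable f"
    by (simp add: summable_Suc_iff)
  have "(\<Sum>m = 1..M. real m powr (- 1 - s)) = (\<Sum>n<M. f n)"
    by (simp add: f_def sum.atLeast1_atMost_eq)
  also have "\<dots> \<le> suminf f"
    using \<open>summable f\<close> by (rule sum_le_suminf) (auto simp: f_def)
  also have "\<dots> = (\<Sum>n. f (Suc n)) + 1"
    using suminf_split_head[OF \<open>summable f\<close>] by (simp add: f_def)
  finally show ?thesis
    using tail by simp
qed

lemma fourier_weight_le_inverse:
  assumes "1 \<le> k"
  shows "fourier_weight dl k \<le> 1 / real k"
proof -
  have "1 / (pi * real k) \<le> 1 / real k"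
    using assms pi_gt3 by (intro divide_left_mono) auto
  then show ?thesis
    unfolding fourier_weight_def by linarith
qed

lemma fourier_weight_le_inverse_square:
  assumes "1 \<le> H" "1 \<le> k"
  shows "fourier_weight (1 / (2 * real H)) k \<le> real H / (real k)\<^sup>2"
proof -
  have "2 * (real k)\<^sup>2 \<le> pi\<^sup>2 * (real k)\<^sup>2"
    using pi_gt3 power_mono[of 3 pi 2] by (intro mult_right_mono) auto
  then have "2 * real H / (pi\<^sup>2 * (real k)\<^sup>2) \<le> 2 * real H / (2 * (real k)\<^sup>2)"
    using assms by (intro divide_left_mono) auto
  then show ?thesis
    using assms by (simp add: fourier_weight_def)
qed

definition weight_sum_bound :: "real \<Rightarrow> nat \<Rightarrow> real" where
  "weight_sum_bound ka H = (if 0 < ka then (1 / ka + 2) * real H powr ka else 3 + ln (real H))"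

lemma fourier_weight_powr_le:
  assumes "1 \<le> H"
  shows "fourier_weight (1 / (2 * real H)) (Suc n) * real (Suc n) powr ka
           \<le> (if n < H then real (Suc n) powr (ka - 1) else real H * real (Suc n) powr (ka - 2))"
proof (cases "n < H")
  case True
  have "fourier_weight (1 / (2 * real H)) (Suc n) * real (Suc n) powr ka \<le> real (Suc n) powr ka / real (Suc n)"
    using mult_right_mono[OF fourier_weight_le_inverse[of "Suc n"], of "real (Suc n) powr ka"] by simp
  then show ?thesis
    using True by (simp add: powr_diff)
next
  case False
  have "fourier_weight (1 / (2 * real H)) (Suc n) * real (Suc n) powr ka
          \<le> real H / (real (Suc n))\<^sup>2 * real (Suc n) powr ka"
    using fourier_weight_le_inverse_square[OF assms, of "Suc n"] by (intro mult_right_mono) auto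
  then show ?thesis
    using False by (simp add: powr_diff powr_numeral del: of_nat_Suc)
qed

lemma weight_majorant_sums_le:
  assumes "1 \<le> H" "0 \<le> ka" "ka \<le> 1 / 2"
  defines "b \<equiv> \<lambda>n. if n < H then real (Suc n) powr (ka - 1) else real H * real (Suc n) powr (ka - 2)"
  shows "summable b" "suminf b \<le> weight_sum_bound ka H"
proof -
  have e: "- 1 - (1 - ka) = ka - 2"
    by simp
  note tail = powr_tail_sums_le[of "1 - ka" H, unfolded e]
  have b_shift: "b (n + H) = real H * real (n + H + 1) powr (ka - 2)" for n
    by (simp add: b_def)
  then have "summable (\<lambda>n. b (n + H))"
    using tail assms by (simp add: summable_mult)
  then show "summable b"
    by (simp add: summable_iff_shift)
  then have "suminf b = (\<Sum>n. b (n + H)) + (\<Sum>n<H. b n)"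
    by (rule suminf_split_initial_segment)
  also have "(\<Sum>n<H. b n) = (\<Sum>n<H. real (Suc n) powr (ka - 1))"
    by (simp add: b_def)
  also have "(\<Sum>n. b (n + H)) \<le> 2 * real H powr ka"
  proof -
    have "(\<Sum>n. b (n + H)) = real H * (\<Sum>n. real (n + H + 1) powr (ka - 2))"
      unfolding b_shift using tail assms by (intro suminf_mult) simp
    also have "\<dots> \<le> real H * (real H powr (ka - 1) / (1 - ka))"
      using tail assms by (intro mult_left_mono) auto
    also have "\<dots> \<le> real H * (real H powr (ka - 1) * 2)"
      using assms by (intro mult_left_mono) (auto simp: field_simps)
    also have "\<dots> = 2 * real H powr ka"
      using assms by (simp add: powr_diff)
    finally show ?thesis .
  qed
  also have "(\<Sum>n<H. real (Suc n) powr (ka - 1)) \<le> (if 0 < ka then real H powr ka / ka else 1 + ln (real H))"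
    using sum_powr_le[of ka H] harm_le_one_plus_ln[OF assms(1)] assms
    by (auto simp: harm_altdef powr_minus_divide field_simps)
  finally show "suminf b \<le> weight_sum_bound ka H"
    using assms(1,2) by (auto simp: weight_sum_bound_def field_simps)
qed

lemma suminf_fourier_weight_le:
  fixes s :: "nat \<Rightarrow> real"
  assumes "1 \<le> H" "0 \<le> ka" "ka \<le> 1 / 2" "0 \<le> A" "0 \<le> X" "0 \<le> Y"
    and s_le: "\<And>k. 1 \<le> k \<Longrightarrow> s k \<le> A * (real k powr ka * X + Y / real k)"
    and summable: "summable (\<lambda>n. fourier_weight (1 / (2 * real H)) (Suc n) * s (Suc n))"
  shows "(\<Sum>n. fourier_weight (1 / (2 * real H)) (Suc n) * s (Suc n))
           \<le> A * X * weight_sum_bound ka H + 3 * A * Y"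
proof -
  define w where "w = fourier_weight (1 / (2 * real H))"
  define b where "b n = (if n < H then real (Suc n) powr (ka - 1) else real H * real (Suc n) powr (ka - 2))"
    for n
  have b: "summable b" "suminf b \<le> weight_sum_bound ka H"
    using weight_majorant_sums_le[OF assms(1-3)] by (simp_all add: b_def[abs_def])
  have "w (Suc n) * s (Suc n) \<le> A * X * b n + A * Y * (1 / (real (Suc n))\<^sup>2)" for n
  proof -
    have "w (Suc n) * s (Suc n) \<le> w (Suc n) * (A * (real (Suc n) powr ka * X + Y / real (Suc n)))"
      using s_le[of "Suc n"] fourier_weight_nonneg[of "1 / (2 * real H)"] by (simp add: w_def mult_left_mono)
    also have "\<dots> = A * X * (w (Suc n) * real (Suc n) powr ka) + A * Y * (w (Suc n) / real (Suc n))"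
      by (simp add: algebra_simps)
    also have "\<dots> \<le> A * X * b n + A * Y * (1 / (real (Suc n))\<^sup>2)"
      using fourier_weight_powr_le[OF assms(1), of n ka]
        divide_right_mono[OF fourier_weight_le_inverse[of "Suc n"], of "real (Suc n)"] assms
      by (intro add_mono mult_left_mono) (auto simp: w_def b_def power2_eq_square)
    finally show ?thesis .
  qed
  then have "(\<Sum>n. w (Suc n) * s (Suc n)) \<le> (\<Sum>n. A * X * b n + A * Y * (1 / (real (Suc n))\<^sup>2))"
    using summable b(1) summable_inverse_squares
    by (intro suminf_le summable_add summable_mult) (auto simp: w_def)
  also have "\<dots> = A * X * suminf b + A * Y * (pi\<^sup>2 / 6)"
    using sums_add[OF sums_mult[OF summable_sums[OF b(1)]] sums_mult[OF inverse_squares_sums]]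
    by (simp add: sums_iff)
  also have "\<dots> \<le> A * X * weight_sum_bound ka H + A * Y * 3"
    using b(2) pi_less_4 power_mono[of pi 4 2] assms by (intro add_mono mult_left_mono) auto
  finally show ?thesis
    by (simp add: w_def mult_ac)
qed

section \<open>Exponential sums via the exponent pair\<close>

definition dyadic_cofactors :: "nat \<Rightarrow> real \<Rightarrow> nat set" where
  "dyadic_cofactors m D = {n. D < real m * real n \<and> real m * real n \<le> 2 * D}"

lemma dyadic_cofactors_subset:
  assumes "0 \<le> D" "1 \<le> m"
  shows "dyadic_cofactors m D \<subseteq> {1..nat \<lfloor>2 * D / real m\<rfloor>}"
proof
  fix n assume "n \<in> dyadic_cofactors m D"
  then have "D < real m * real n" "real n \<le> 2 * D / real m"
    using assms by (auto simp: dyadic_cofactors_def field_simps)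
  then show "n \<in> {1..nat \<lfloor>2 * D / real m\<rfloor>}"
    using assms by (cases n) (auto simp: le_nat_floor le_floor_iff)
qed

lemma finite_dyadic_cofactors [simp]: "0 \<le> D \<Longrightarrow> 1 \<le> m \<Longrightarrow> finite (dyadic_cofactors m D)"
  using dyadic_cofactors_subset finite_subset by blast

lemma card_dyadic_cofactors_le:
  assumes "0 \<le> D" "1 \<le> m"
  shows "real (card (dyadic_cofactors m D)) \<le> 2 * D / real m"
proof -
  have "card (dyadic_cofactors m D) \<le> nat \<lfloor>2 * D / real m\<rfloor>"
    using card_mono[OF _ dyadic_cofactors_subset[OF assms]] by simp
  then have "real (card (dyadic_cofactors m D)) \<le> real (nat \<lfloor>2 * D / real m\<rfloor>)"
    by simp
  also have "\<dots> \<le> 2 * D / real m"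
    using assms by simp
  finally show ?thesis .
qed

text \<open>The \<open>j\<close>-th derivative of the phase \<open>t \<mapsto> c / (m t + \<delta>)\<close>.\<close>

definition recip_phase_deriv :: "real \<Rightarrow> nat \<Rightarrow> real \<Rightarrow> nat \<Rightarrow> real \<Rightarrow> real" where
  "recip_phase_deriv c m dl j t = c * (-1) ^ j * fact j * real m ^ j * (real m * t + dl) powr (- (real j + 1))"

lemma recip_phase_deriv_has_derivative:
  assumes "0 < real m * t + dl"
  shows "(recip_phase_deriv c m dl j has_real_derivative recip_phase_deriv c m dl (Suc j) t) (at t)"
proof -
  have "((\<lambda>t. (real m * t + dl) powr (- (real j + 1))) has_real_derivative
          - (real j + 1) * (real m * t + dl) powr (- (real j + 1) - 1) * real m) (at t)"
    using assms by (auto intro!: derivative_eq_intros)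
  from DERIV_cmult[OF this, of "c * (-1) ^ j * fact j * real m ^ j"] show ?thesis
    unfolding recip_phase_deriv_def by (simp add: algebra_simps fact_Suc)
qed

lemma abs_recip_phase_deriv:
  assumes "0 < real m * t + dl" "0 \<le> c"
  shows "\<bar>recip_phase_deriv c m dl j t\<bar> = fact j * (c * real m ^ j) / (real m * t + dl) ^ (j + 1)"
proof -
  have "(real m * t + dl) powr (- (real j + 1)) = 1 / (real m * t + dl) powr (real j + 1)"
    by (rule powr_minus_divide)
  also have "\<dots> = 1 / (real m * t + dl) ^ (j + 1)"
    using assms(1) powr_realpow[of "real m * t + dl" "j + 1"] by (simp add: add.commute)
  finally have "(real m * t + dl) powr (- (real j + 1)) = 1 / (real m * t + dl) ^ (j + 1)" .
  then show ?thesis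
    using assms by (simp add: recip_phase_deriv_def abs_mult power_abs)
qed

lemma fact_div_power_bounds:
  fixes D u c P :: real
  assumes "0 < D" "D \<le> u" "u \<le> c * D" "1 \<le> c" "0 \<le> P" "j \<le> r"
  defines "A \<equiv> fact r * c ^ (r + 1)"
  shows "P / D ^ (j + 1) / A \<le> fact j * P / u ^ (j + 1)"
    "fact j * P / u ^ (j + 1) \<le> A * (P / D ^ (j + 1))"
proof -
  have u: "0 < u" "D ^ (j + 1) \<le> u ^ (j + 1)" "u ^ (j + 1) \<le> (c * D) ^ (j + 1)"
    using assms by (auto intro!: power_mono simp del: power_Suc)
  have c: "1 \<le> c ^ (r + 1)" "c ^ (j + 1) \<le> c ^ (r + 1)"
    using one_le_power[of c "r + 1"] power_increasing[of "j + 1" "r + 1" c] assms by simp_all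
  have "P / u ^ (j + 1) \<le> P / D ^ (j + 1)"
    using u assms by (intro divide_left_mono) auto
  then have "fact j * (P / u ^ (j + 1)) \<le> fact r * (P / D ^ (j + 1))"
    using fact_mono[OF assms(6), where 'a = real] assms by (intro mult_mono) auto
  then have "fact j * P / u ^ (j + 1) \<le> fact r * (P / D ^ (j + 1))"
    by simp
  also have "\<dots> \<le> A * (P / D ^ (j + 1))"
    using c assms by (intro mult_right_mono) auto
  finally show "fact j * P / u ^ (j + 1) \<le> A * (P / D ^ (j + 1))" .
  have "c ^ (r + 1) \<le> A"
    using c(1) mult_right_mono[OF fact_ge_1[of r], of "c ^ (r + 1)"] by (simp add: A_def)
  then have "c ^ (j + 1) \<le> A"
    using c(2) by (rule order_trans[rotated])
  moreover have "0 < c ^ (j + 1)"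
    using assms by simp
  ultimately have "P / D ^ (j + 1) / A \<le> P / D ^ (j + 1) / c ^ (j + 1)"
    using assms by (intro divide_left_mono) auto
  also have "\<dots> = P / (c * D) ^ (j + 1)"
    by (simp add: power_mult_distrib mult_ac)
  also have "\<dots> \<le> P / u ^ (j + 1)"
    using u assms by (intro divide_left_mono) auto
  also have "\<dots> \<le> fact j * P / u ^ (j + 1)"
    using u assms by (simp add: divide_right_mono mult_le_cancel_right1)
  finally show "P / D ^ (j + 1) / A \<le> fact j * P / u ^ (j + 1)" .
qed

lemma recip_phase_deriv_size:
  assumes "1 \<le> D" "1 \<le> m" "0 \<le> dl" "0 \<le> c" "j \<le> r" "t \<in> {D / real m..2 * (D / real m)}"
  defines "A \<equiv> fact r * (2 + dl) ^ (r + 1)" and "T \<equiv> c / D" and "N \<equiv> D / real m"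
  shows "T / N ^ j / A \<le> \<bar>recip_phase_deriv c m dl j t\<bar> \<and> \<bar>recip_phase_deriv c m dl j t\<bar> \<le> A * T / N ^ j"
proof -
  have "D \<le> real m * t" "real m * t \<le> 2 * D"
    using assms(2,6) by (auto simp: field_simps)
  then have u: "D \<le> real m * t + dl" "real m * t + dl \<le> (2 + dl) * D"
    using assms(1,3) mult_right_mono[OF assms(1), of dl] by (simp_all add: algebra_simps)
  have TN: "T / N ^ j = c * real m ^ j / D ^ (j + 1)"
    using assms(1,2) by (simp add: T_def N_def power_divide)
  have "\<bar>recip_phase_deriv c m dl j t\<bar> = fact j * (c * real m ^ j) / (real m * t + dl) ^ (j + 1)"
    using u assms(1,4) by (intro abs_recip_phase_deriv) auto
  with fact_div_power_bounds[OF _ u, of "c * real m ^ j" j r] assms(1,3-5) show ?thesis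
    unfolding times_divide_eq_right[symmetric] TN by (simp add: A_def)
qed

definition exponent_pair_estimate :: "real \<Rightarrow> real \<Rightarrow> nat \<Rightarrow> real \<Rightarrow> real \<Rightarrow> bool" where
  "exponent_pair_estimate ka la r A C \<longleftrightarrow>
     (\<forall>(N::real) (T::real) (a::real) (b::real) (Fd::nat \<Rightarrow> real \<Rightarrow> real).
          N \<ge> 1 \<longrightarrow> T > 0 \<longrightarrow> N \<le> a \<longrightarrow> a \<le> b \<longrightarrow> b \<le> 2 * N \<longrightarrow>
          (\<forall>j<r. \<forall>t\<in>{a..b}. (Fd j has_real_derivative Fd (Suc j) t) (at t)) \<longrightarrow>
          (\<forall>j\<in>{1..r}. \<forall>t\<in>{a..b}. T / N ^ j / A \<le> \<bar>Fd j t\<bar> \<and> \<bar>Fd j t\<bar> \<le> A * T / N ^ j) \<longrightarrow>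
          cmod (\<Sum>n\<in>{n::int. a < of_int n \<and> of_int n \<le> b}. ee (Fd 0 (of_int n)))
            \<le> C * ((T / N) powr ka * N powr la + N / T))"

lemma exponent_pair_iff:
  "exponent_pair ka la \<longleftrightarrow> 0 \<le> ka \<and> ka \<le> 1/2 \<and> 1/2 \<le> la \<and> la \<le> 1 \<and>
     (\<exists>r\<ge>1. \<forall>A\<ge>1. \<exists>C>0. exponent_pair_estimate ka la r A C)"
  unfolding exponent_pair_def exponent_pair_estimate_def by blast

lemma exponent_pair_bounds:
  "exponent_pair ka la \<Longrightarrow> 0 \<le> ka \<and> ka \<le> 1/2 \<and> 1/2 \<le> la \<and> la \<le> 1"
  unfolding exponent_pair_def by blast

lemma exponent_pair_estimateD:
  assumes "exponent_pair_estimate ka la r A C" "1 \<le> N" "0 < T"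
    and "\<And>j t. j < r \<Longrightarrow> t \<in> {N..2 * N} \<Longrightarrow> (Fd j has_real_derivative Fd (Suc j) t) (at t)"
    and "\<And>j t. j \<in> {1..r} \<Longrightarrow> t \<in> {N..2 * N} \<Longrightarrow> T / N ^ j / A \<le> \<bar>Fd j t\<bar> \<and> \<bar>Fd j t\<bar> \<le> A * T / N ^ j"
  shows "cmod (\<Sum>n\<in>{n::int. N < of_int n \<and> of_int n \<le> 2 * N}. ee (Fd 0 (of_int n)))
           \<le> C * ((T / N) powr ka * N powr la + N / T)"
  using assms unfolding exponent_pair_estimate_def by auto

lemma sum_int_dyadic_interval:
  assumes "0 \<le> D" "1 \<le> m"
  shows "(\<Sum>n\<in>{n::int. D / real m < of_int n \<and> of_int n \<le> 2 * (D / real m)}. f n)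
           = (\<Sum>n\<in>dyadic_cofactors m D. f (int n))"
proof -
  have iff: "D / real m < y \<longleftrightarrow> D < real m * y" "y \<le> 2 * D / real m \<longleftrightarrow> real m * y \<le> 2 * D"
    for y :: real
    using assms by (simp_all add: divide_less_eq le_divide_eq mult.commute)
  have "{n::int. D / real m < of_int n \<and> of_int n \<le> 2 * (D / real m)} = int ` dyadic_cofactors m D"
  proof (intro set_eqI iffI)
    fix n :: int
    assume "n \<in> {n::int. D / real m < of_int n \<and> of_int n \<le> 2 * (D / real m)}"
    then have n: "D < real m * of_int n" "real m * of_int n \<le> 2 * D"
      by (simp_all add: iff)
    then have "0 < real m * of_int n"
      using assms by linarith
    then have "0 \<le> n"
      by (simp add: zero_less_mult_iff)
    with n show "n \<in> int ` dyadic_cofactors m D"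
      by (intro image_eqI[of _ _ "nat n"]) (simp_all add: dyadic_cofactors_def)
  qed (auto simp: dyadic_cofactors_def iff)
  then show ?thesis
    by (simp add: sum.reindex)
qed

lemma exp_sum_recip_le_of_estimate:
  assumes C: "exponent_pair_estimate ka la r (fact r * (2 + dl) ^ (r + 1)) C"
    and "0 \<le> dl" and D: "1 \<le> D" and m: "1 \<le> m" "real m \<le> D" and x: "0 < x" and h: "1 \<le> h"
  shows "cmod (exp_sum (dyadic_cofactors m D) (\<lambda>n. x / (real m * real n + dl)) h)
           \<le> C * (real h powr ka * ((x * real m / D\<^sup>2) powr ka * (D / real m) powr la)
                  + D\<^sup>2 / (x * real m) / real h)"
proof -
  define N where "N = D / real m"
  define T where "T = real h * x / D"
  have N: "1 \<le> N" and T: "0 < T"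
    using D m x h by (simp_all add: N_def T_def)
  have estimate: "cmod (\<Sum>n\<in>{n::int. N < of_int n \<and> of_int n \<le> 2 * N}.
          ee (recip_phase_deriv (real h * x) m dl 0 (of_int n))) \<le> C * ((T / N) powr ka * N powr la + N / T)"
  proof (rule exponent_pair_estimateD[OF C N T, where Fd = "recip_phase_deriv (real h * x) m dl"])
    fix j t assume "t \<in> {N..2 * N}"
    then have "0 < real m * t + dl"
      using m D assms(2) by (auto simp: N_def field_simps intro: add_pos_nonneg)
    then show "(recip_phase_deriv (real h * x) m dl j has_real_derivative
                recip_phase_deriv (real h * x) m dl (Suc j) t) (at t)"
      by (rule recip_phase_deriv_has_derivative)
  next
    fix j t assume "j \<in> {1..r}" "t \<in> {N..2 * N}"
    then show "T / N ^ j / (fact r * (2 + dl) ^ (r + 1)) \<le> \<bar>recip_phase_deriv (real h * x) m dl j t\<bar> \<and>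
            \<bar>recip_phase_deriv (real h * x) m dl j t\<bar> \<le> fact r * (2 + dl) ^ (r + 1) * T / N ^ j"
      using recip_phase_deriv_size[OF D m(1) assms(2), of "real h * x" j r t] x
      by (simp add: T_def N_def)
  qed
  have "recip_phase_deriv (real h * x) m dl 0 (real n) = real h * (x / (real m * real n + dl))" for n
    using assms(2) by (simp add: recip_phase_deriv_def powr_minus_divide)
  then have "cmod (exp_sum (dyadic_cofactors m D) (\<lambda>n. x / (real m * real n + dl)) h)
               = cmod (\<Sum>n\<in>{n::int. N < of_int n \<and> of_int n \<le> 2 * N}.
                        ee (recip_phase_deriv (real h * x) m dl 0 (of_int n)))"
    using D m sum_int_dyadic_interval[of D m "\<lambda>n. ee (recip_phase_deriv (real h * x) m dl 0 (of_int n))"]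
    by (simp add: N_def exp_sum_def)
  also note estimate
  also have "T / N = real h * (x * real m / D\<^sup>2)"
    using m D by (simp add: T_def N_def power2_eq_square)
  also have "N / T = D\<^sup>2 / (x * real m) / real h"
    using m D by (simp add: T_def N_def power2_eq_square)
  also have "(real h * (x * real m / D\<^sup>2)) powr ka = real h powr ka * (x * real m / D\<^sup>2) powr ka"
    by (rule powr_mult; use x in simp)
  finally show ?thesis
    by (simp add: N_def mult_ac)
qed

lemma exp_sum_recip_le:
  assumes "exponent_pair ka la" "0 \<le> dl"
  obtains C where "0 < C"
    "\<And>m x D h. 1 \<le> D \<Longrightarrow> 1 \<le> m \<Longrightarrow> real m \<le> D \<Longrightarrow> 0 < x \<Longrightarrow> 1 \<le> h \<Longrightarrow>
       cmod (exp_sum (dyadic_cofactors m D) (\<lambda>n. x / (real m * real n + dl)) h)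
         \<le> C * (real h powr ka * ((x * real m / D\<^sup>2) powr ka * (D / real m) powr la)
                + D\<^sup>2 / (x * real m) / real h)"
proof -
  obtain r where estimates: "\<And>A. 1 \<le> A \<Longrightarrow> \<exists>C>0. exponent_pair_estimate ka la r A C"
    using assms(1) unfolding exponent_pair_iff by blast
  have "1 \<le> fact r * (2 + dl) ^ (r + 1)"
    using mult_mono[OF fact_ge_1 one_le_power[of "2 + dl" "r + 1"]] assms(2) by simp
  then obtain C where "0 < C" and C: "exponent_pair_estimate ka la r (fact r * (2 + dl) ^ (r + 1)) C"
    using estimates by blast
  show ?thesis
    using that[OF \<open>0 < C\<close>] exp_sum_recip_le_of_estimate[OF C assms(2)] by blast
qed

section \<open>The inner sums\<close>

lemma abs_sum_psi_recip_le:
  assumes "exponent_pair ka la" "0 \<le> dl"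
  obtains C where "0 < C"
    "\<And>m x D H. 1 \<le> D \<Longrightarrow> 1 \<le> m \<Longrightarrow> real m \<le> D \<Longrightarrow> 0 < x \<Longrightarrow> 1 \<le> H \<Longrightarrow>
       \<bar>\<Sum>n\<in>dyadic_cofactors m D. psi (x / (real m * real n + dl))\<bar>
         \<le> D / real m / (2 * real H)
            + C * ((x * real m / D\<^sup>2) powr ka * (D / real m) powr la) * weight_sum_bound ka H
            + 3 * C * (D\<^sup>2 / (x * real m))"
proof -
  obtain C where "0 < C" and C: "\<And>m x D h. 1 \<le> D \<Longrightarrow> 1 \<le> m \<Longrightarrow> real m \<le> D \<Longrightarrow> 0 < x \<Longrightarrow> 1 \<le> h \<Longrightarrow>
       cmod (exp_sum (dyadic_cofactors m D) (\<lambda>n. x / (real m * real n + dl)) h)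
         \<le> C * (real h powr ka * ((x * real m / D\<^sup>2) powr ka * (D / real m) powr la)
                + D\<^sup>2 / (x * real m) / real h)"
    using exp_sum_recip_le[OF assms] by blast
  have ka: "0 \<le> ka" "ka \<le> 1 / 2"
    using exponent_pair_bounds[OF assms(1)] by auto
  show ?thesis
  proof (rule that[OF \<open>0 < C\<close>])
    fix m :: nat and x D :: real and H :: nat
    assume D: "1 \<le> D" and m: "1 \<le> m" "real m \<le> D" and x: "0 < x" and H: "1 \<le> H"
    define J where "J = dyadic_cofactors m D"
    define y where "y n = x / (real m * real n + dl)" for n
    have dl': "0 < 1 / (2 * real H)" "1 / (2 * real H) < 1"
      using H by auto
    have "\<bar>\<Sum>n\<in>J. psi (y n)\<bar> \<le> real (card J) * (1 / (2 * real H)) / 2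
            + (\<Sum>n. fourier_weight (1 / (2 * real H)) (Suc n) * cmod (exp_sum J y (Suc n)))"
      by (rule abs_sum_psi_le_exp_sums[OF dl'])
    also have "real (card J) * (1 / (2 * real H)) / 2 \<le> D / real m / (2 * real H)"
      using card_dyadic_cofactors_le[of D m] D m H by (simp add: J_def field_simps)
    also have "(\<Sum>n. fourier_weight (1 / (2 * real H)) (Suc n) * cmod (exp_sum J y (Suc n)))
               \<le> C * ((x * real m / D\<^sup>2) powr ka * (D / real m) powr la) * weight_sum_bound ka H
                 + 3 * C * (D\<^sup>2 / (x * real m))"
      using H ka \<open>0 < C\<close> x C[OF D m x]
      by (intro suminf_fourier_weight_le summable_fourier_weight_exp_sum dl'(1))
        (auto simp: J_def y_def algebra_simps)
    finally show "\<bar>\<Sum>n\<in>dyadic_cofactors m D. psi (x / (real m * real n + dl))\<bar>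
         \<le> D / real m / (2 * real H)
            + C * ((x * real m / D\<^sup>2) powr ka * (D / real m) powr la) * weight_sum_bound ka H
            + 3 * C * (D\<^sup>2 / (x * real m))"
      by (simp add: J_def y_def add.assoc)
  qed
qed

lemma powr_balance:
  fixes P X ka :: real
  assumes "0 < P" "0 < X" "0 \<le> ka"
  shows "P / (P / X) powr (1 / (1 + ka)) = (P powr ka * X) powr (1 / (1 + ka))"
    "X * ((P / X) powr (1 / (1 + ka))) powr ka = (P powr ka * X) powr (1 / (1 + ka))"
proof -
  define q where "q = 1 / (1 + ka)"
  have q: "1 - q = ka * q"
    using assms by (simp add: q_def field_simps)
  have W: "(P powr ka * X) powr q = P powr (ka * q) * X powr q"
    using assms by (simp add: powr_mult powr_powr)
  have Z: "(P / X) powr q = P powr q / X powr q"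
    using assms by (simp add: powr_divide)
  have "P / (P / X) powr q = P powr 1 * X powr q / P powr q"
    using assms by (simp add: Z)
  also have "\<dots> = (P powr ka * X) powr q"
    by (simp add: W powr_diff flip: q)
  finally show "P / (P / X) powr (1 / (1 + ka)) = (P powr ka * X) powr (1 / (1 + ka))"
    by (simp add: q_def)
  have "X * ((P / X) powr q) powr ka = X powr 1 * P powr (q * ka) / X powr (q * ka)"
    using assms by (simp add: Z powr_divide powr_powr)
  also have "\<dots> = X powr (1 - q * ka) * P powr (q * ka)"
    by (simp add: powr_diff)
  also have "1 - q * ka = q"
    using q by (simp add: mult.commute)
  also have "X powr q * P powr (q * ka) = (P powr ka * X) powr q"
    unfolding W by (simp add: mult_ac)
  finally show "X * ((P / X) powr (1 / (1 + ka))) powr ka = (P powr ka * X) powr (1 / (1 + ka))"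
    by (simp add: q_def)
qed

text \<open>Choosing \<open>H \<approx> (P/X)\<^bsup>1/(1+\<kappa>)\<^esup>\<close> balances \<open>P/H\<close> against \<open>X H\<^sup>\<kappa>\<close>.\<close>

lemma exists_nat_balance:
  fixes P X ka E :: real
  assumes "0 < P" "0 < X" "0 \<le> ka" "ka \<le> 1" "0 \<le> E"
  obtains H :: nat where "1 \<le> H"
    "P / (2 * real H) + E * X * real H powr ka \<le> (1 + 2 * E) * ((P powr ka * X) powr (1 / (1 + ka)) + X)"
proof -
  define Z where "Z = (P / X) powr (1 / (1 + ka))"
  define W where "W = (P powr ka * X) powr (1 / (1 + ka))"
  define H where "H = nat \<lceil>max 1 Z\<rceil>"
  have H: "max 1 Z \<le> real H" "real H \<le> 2 * max 1 Z" "1 \<le> H"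
    unfolding H_def by linarith+
  have Hk: "real H powr ka \<le> 2 * max 1 Z powr ka"
  proof -
    have "real H powr ka \<le> (2 * max 1 Z) powr ka"
      using H assms by (intro powr_mono2) auto
    also have "\<dots> = 2 powr ka * max 1 Z powr ka"
      by (simp add: powr_mult)
    also have "\<dots> \<le> 2 * max 1 Z powr ka"
      using assms powr_mono[of ka 1 2] by (intro mult_right_mono) auto
    finally show ?thesis .
  qed
  have "P / (2 * real H) \<le> P / max 1 Z"
    using H assms by (intro divide_left_mono) auto
  moreover have "E * X * real H powr ka \<le> 2 * E * (X * max 1 Z powr ka)"
    using mult_left_mono[OF Hk, of "E * X"] assms by (simp add: mult_ac)
  moreover have "P / max 1 Z + 2 * E * (X * max 1 Z powr ka) \<le> (1 + 2 * E) * (W + X)"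
  proof (cases "1 \<le> Z")
    case True
    then have "P / max 1 Z + 2 * E * (X * max 1 Z powr ka) = (1 + 2 * E) * W"
      using powr_balance[OF assms(1-3)] by (simp add: W_def Z_def algebra_simps)
    also have "\<dots> \<le> (1 + 2 * E) * (W + X)"
      using assms by (intro mult_left_mono) auto
    finally show ?thesis .
  next
    case False
    then have "P / X < 1"
      using assms ge_one_powr_ge_zero[of "P / X" "1 / (1 + ka)"] by (force simp: Z_def)
    then have "P / max 1 Z + 2 * E * (X * max 1 Z powr ka) \<le> X + 2 * E * X"
      using False assms by (simp add: field_simps)
    also have "\<dots> \<le> (1 + 2 * E) * (W + X)"
      using assms by (simp add: W_def algebra_simps)
    finally show ?thesis .
  qed
  ultimately show ?thesis
    using that[OF H(3)] by (simp add: W_def)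
qed

lemma dyadic_term_eq:
  fixes x m D ka la :: real
  assumes "0 < x" "0 < m" "0 < D"
  shows "(x * m / D\<^sup>2) powr ka * (D / m) powr la = x powr ka * D powr (la - 2 * ka) * m powr (ka - la)"
proof -
  have "(D\<^sup>2) powr ka = D powr (2 * ka)"
    using assms powr_powr[of D 2 ka] by (simp add: powr_numeral)
  then have "(x * m / D\<^sup>2) powr ka * (D / m) powr la = x powr ka * m powr ka / D powr (2 * ka) * (D powr la / m powr la)"
    using assms by (simp add: powr_mult powr_divide)
  also have "\<dots> = x powr ka * (D powr la / D powr (2 * ka)) * (m powr ka / m powr la)"
    by (simp add: field_simps)
  also have "\<dots> = x powr ka * D powr (la - 2 * ka) * m powr (ka - la)"
    by (simp add: powr_diff)
  finally show ?thesis .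
qed

lemma dyadic_balance_eq:
  fixes x m D ka la :: real
  assumes "0 < m" "0 < D"
  shows "(D / m) powr ka * (x powr ka * D powr (la - 2 * ka) * m powr (ka - la))
           = x powr ka * D powr (la - ka) * m powr (- la)"
proof -
  have "(D / m) powr ka * (x powr ka * D powr (la - 2 * ka) * m powr (ka - la))
      = x powr ka * (D powr ka * D powr (la - 2 * ka)) * (m powr (ka - la) / m powr ka)"
    using assms by (simp add: powr_divide field_simps)
  then show ?thesis
    by (simp add: powr_add[symmetric] powr_diff[symmetric])
qed

definition psi_sum_majorant :: "real \<Rightarrow> real \<Rightarrow> real \<Rightarrow> real \<Rightarrow> nat \<Rightarrow> real" where
  "psi_sum_majorant ka la x D m =
     (x powr ka * D powr (la - ka) * real m powr (- la)) powr (1 / (1 + ka))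
     + x powr ka * D powr (la - 2 * ka) * real m powr (ka - la) * (if ka = 0 then 1 + ln D else 1)
     + D\<^sup>2 / (x * real m)"

lemma psi_sum_majorant_ge_half:
  assumes "1 \<le> D" "D \<le> x" "1 \<le> m" "real m \<le> 2 * D"
    and "0 \<le> ka" "ka \<le> 1/2" "1/2 \<le> la" "la \<le> 1"
  shows "1 / 2 \<le> psi_sum_majorant ka la x D m"
proof -
  define b where "b = x powr ka * D powr (la - ka) * real m powr (- la)"
  have "D powr ka \<le> x powr ka" "(2 * D) powr (- la) \<le> real m powr (- la)"
    using assms by (auto intro: powr_mono2 powr_mono2')
  then have "D powr ka * D powr (la - ka) * (2 * D) powr (- la) \<le> b"
    unfolding b_def by (intro mult_mono) auto
  moreover have "D powr ka * D powr (la - ka) * (2 * D) powr (- la) = 2 powr (- la)"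
    using assms by (simp add: powr_add[symmetric] powr_mult powr_minus)
  moreover have "2 powr (- 1) \<le> 2 powr (- la)"
    using assms by (intro powr_mono) auto
  ultimately have b: "1 / 2 \<le> b"
    by (simp add: powr_minus)
  have "1 / 2 \<le> b powr (1 / (1 + ka))"
  proof (cases "1 \<le> b")
    case True
    then show ?thesis
      using assms ge_one_powr_ge_zero[of b "1 / (1 + ka)"] by simp
  next
    case False
    then have "b powr 1 \<le> b powr (1 / (1 + ka))"
      using b assms by (intro powr_mono') auto
    then show ?thesis
      using b by simp
  qed
  moreover have "0 \<le> x powr ka * D powr (la - 2 * ka) * real m powr (ka - la) * (if ka = 0 then 1 + ln D else 1)"
    "0 \<le> D\<^sup>2 / (x * real m)"
    using assms by auto
  ultimately show ?thesis
    unfolding psi_sum_majorant_def b_def by linarith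
qed

lemma psi_sum_majorant_split:
  assumes "0 < x" "1 \<le> D" "1 \<le> m"
  shows "psi_sum_majorant ka la x D m =
           ((D / real m) powr ka * ((x * real m / D\<^sup>2) powr ka * (D / real m) powr la)) powr (1 / (1 + ka))
           + (x * real m / D\<^sup>2) powr ka * (D / real m) powr la * (if ka = 0 then 1 + ln D else 1)
           + D\<^sup>2 / (x * real m)"
proof -
  have "(x * real m / D\<^sup>2) powr ka * (D / real m) powr la
          = x powr ka * D powr (la - 2 * ka) * real m powr (ka - la)"
    using assms by (intro dyadic_term_eq) auto
  moreover have "(D / real m) powr ka * (x powr ka * D powr (la - 2 * ka) * real m powr (ka - la))
          = x powr ka * D powr (la - ka) * real m powr (- la)"
    using assms by (intro dyadic_balance_eq) auto
  ultimately show ?thesis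
    unfolding psi_sum_majorant_def by (simp only:)
qed

lemma psi_sum_le_majorant_pos:
  fixes I x D :: real
  assumes "0 < ka" "ka \<le> 1" "0 \<le> C" "1 \<le> D" "1 \<le> m" "0 < x"
    and I: "\<And>H. 1 \<le> H \<Longrightarrow> I \<le> D / real m / (2 * real H)
              + C * ((x * real m / D\<^sup>2) powr ka * (D / real m) powr la) * weight_sum_bound ka H
              + 3 * C * (D\<^sup>2 / (x * real m))"
  shows "I \<le> (1 + 2 * C * (1 / ka + 2) + 3 * C) * psi_sum_majorant ka la x D m"
proof -
  define X where "X = (x * real m / D\<^sup>2) powr ka * (D / real m) powr la"
  define W where "W = ((D / real m) powr ka * X) powr (1 / (1 + ka))"
  define Y where "Y = D\<^sup>2 / (x * real m)"
  define E where "E = C * (1 / ka + 2)"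
  have pos: "0 < X" "0 \<le> W" "0 \<le> Y" "0 \<le> E"
    using assms by (simp_all add: X_def W_def Y_def E_def)
  obtain H where "1 \<le> H" and H: "D / real m / (2 * real H) + E * X * real H powr ka \<le> (1 + 2 * E) * (W + X)"
    using exists_nat_balance[of "D / real m" X ka E] pos assms by (auto simp: W_def powr_divide)
  have "C * X * weight_sum_bound ka H = E * X * real H powr ka"
    using assms by (simp add: weight_sum_bound_def E_def)
  then have "I \<le> (1 + 2 * E) * (W + X) + 3 * C * Y"
    using I[OF \<open>1 \<le> H\<close>, folded X_def Y_def] H by linarith
  also have "\<dots> \<le> (1 + 2 * E + 3 * C) * (W + X + Y)"
    using pos assms by (simp add: algebra_simps)
  also have "W + X + Y = psi_sum_majorant ka la x D m"
    using psi_sum_majorant_split[OF assms(6,4,5)] assms by (simp add: W_def X_def Y_def)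
  finally show ?thesis
    by (simp add: E_def mult.assoc)
qed

lemma psi_sum_le_majorant_zero:
  fixes I x D :: real
  assumes "0 \<le> C" "1 \<le> D" "1 \<le> m" "real m \<le> D" "D \<le> x" "1/2 \<le> la" "la \<le> 1"
    and I: "\<And>H. 1 \<le> H \<Longrightarrow> I \<le> D / real m / (2 * real H)
              + C * ((x * real m / D\<^sup>2) powr 0 * (D / real m) powr la) * weight_sum_bound 0 H
              + 3 * C * (D\<^sup>2 / (x * real m))"
  shows "I \<le> (1 + 7 * C) * psi_sum_majorant 0 la x D m"
proof -
  define X where "X = (x * real m / D\<^sup>2) powr 0 * (D / real m) powr la"
  define Y where "Y = D\<^sup>2 / (x * real m)"
  define H where "H = nat \<lceil>D / real m\<rceil>"
  have "0 < D / real m" "D / real m \<le> D"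
    using assms by (auto simp: field_simps)
  then have H: "D / real m \<le> real H" "real H \<le> 2 * D" "1 \<le> H"
    unfolding H_def using assms by linarith+
  have "ln (real H) \<le> ln (2 * D)"
    using H by simp
  also have "\<dots> \<le> 1 + ln D"
    using assms ln_2_less_1 by (simp add: ln_mult)
  finally have "weight_sum_bound 0 H \<le> 4 * (1 + ln D)"
    using ln_ge_zero[OF assms(2)] by (simp add: weight_sum_bound_def)
  then have "C * X * weight_sum_bound 0 H \<le> C * X * (4 * (1 + ln D))"
    using assms by (intro mult_left_mono) (auto simp: X_def)
  then have "C * X * weight_sum_bound 0 H \<le> 4 * C * (X * (1 + ln D))"
    by (simp add: mult_ac)
  moreover have "D / real m / (2 * real H) \<le> 1 / 2"
    using H assms by (simp add: field_simps)
  ultimately have "I \<le> 1 / 2 + 4 * C * (X * (1 + ln D)) + 3 * C * Y"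
    using I[OF H(3), folded X_def Y_def] by linarith
  then have "I \<le> 1 / 2 + 4 * (C * (X * (1 + ln D))) + 3 * (C * Y)"
    by (simp add: mult.assoc)
  moreover have "1 / 2 \<le> psi_sum_majorant 0 la x D m"
    using assms by (intro psi_sum_majorant_ge_half) auto
  moreover have "X * (1 + ln D) + Y \<le> psi_sum_majorant 0 la x D m"
    using psi_sum_majorant_split[of x D m 0 la] assms by (simp add: X_def Y_def)
  then have "C * (X * (1 + ln D)) + C * Y \<le> C * psi_sum_majorant 0 la x D m"
    using assms by (simp add: mult_left_mono flip: distrib_left)
  moreover have "0 \<le> C * (X * (1 + ln D))" "0 \<le> C * Y"
    using assms by (simp_all add: X_def Y_def)
  ultimately have "I \<le> psi_sum_majorant 0 la x D m + 7 * (C * psi_sum_majorant 0 la x D m)"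
    by linarith
  then show ?thesis
    by (simp add: algebra_simps)
qed

lemma abs_psi_le: "\<bar>psi t\<bar> \<le> 1 / 2"
  unfolding psi_def using frac_lt_1[of t] frac_ge_0[of t] by linarith

lemma dyadic_cofactors_subset_one:
  assumes "0 \<le> D" "D < real m"
  shows "dyadic_cofactors m D \<subseteq> {1}"
proof
  fix n assume "n \<in> dyadic_cofactors m D"
  then have n: "D < real m * real n" "real m * real n \<le> 2 * D"
    by (auto simp: dyadic_cofactors_def)
  have "\<not> 2 \<le> n"
  proof
    assume "2 \<le> n"
    then have "real m * 2 \<le> real m * real n"
      by (intro mult_left_mono) auto
    with n assms show False
      by linarith
  qed
  moreover have "n \<noteq> 0"
  proof
    assume "n = 0"
    with n assms show False
      by simp
  qed
  ultimately show "n \<in> {1}"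
    by auto
qed

lemma abs_sum_psi_le_half:
  assumes "0 \<le> D" "D < real m"
  shows "\<bar>\<Sum>n\<in>dyadic_cofactors m D. psi (y n)\<bar> \<le> 1 / 2"
proof -
  have "\<bar>\<Sum>n\<in>dyadic_cofactors m D. psi (y n)\<bar> \<le> (\<Sum>n\<in>{1::nat}. \<bar>psi (y n)\<bar>)"
    using dyadic_cofactors_subset_one[OF assms] by (intro order_trans[OF sum_abs] sum_mono2) auto
  then show ?thesis
    using abs_psi_le[of "y 1"] by simp
qed

lemma psi_sum_le_majorant:
  fixes I x D :: real
  assumes ka_la: "0 \<le> ka" "ka \<le> 1/2" "1/2 \<le> la" "la \<le> 1"
    and "0 \<le> C" and D: "1 \<le> D" and m: "1 \<le> m" "real m \<le> 2 * D" and x: "D \<le> x"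
    and small: "D < real m \<Longrightarrow> I \<le> 1 / 2"
    and I: "\<And>H. real m \<le> D \<Longrightarrow> 1 \<le> H \<Longrightarrow> I \<le> D / real m / (2 * real H)
              + C * ((x * real m / D\<^sup>2) powr ka * (D / real m) powr la) * weight_sum_bound ka H
              + 3 * C * (D\<^sup>2 / (x * real m))"
  shows "I \<le> (1 + 2 * C * (1 / ka + 2) + 7 * C) * psi_sum_majorant ka la x D m"
proof -
  define K where "K = 1 + 2 * C * (1 / ka + 2) + 7 * C"
  have K: "1 + 2 * C * (1 / ka + 2) + 3 * C \<le> K" "1 + 7 * C \<le> K" "1 \<le> K"
    using \<open>0 \<le> C\<close> ka_la by (auto simp: K_def)
  define M where "M = psi_sum_majorant ka la x D m"
  have M: "1 / 2 \<le> M"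
    unfolding M_def using psi_sum_majorant_ge_half D m x ka_la by blast
  then have "0 \<le> M"
    by simp
  consider "D < real m" | "real m \<le> D" "0 < ka" | "real m \<le> D" "ka = 0"
    using ka_la by linarith
  then have "I \<le> K * M"
  proof cases
    case 1
    with small M mult_right_mono[OF K(3) \<open>0 \<le> M\<close>] show ?thesis
      by linarith
  next
    case 2
    then have "I \<le> (1 + 2 * C * (1 / ka + 2) + 3 * C) * M"
      unfolding M_def using D m x ka_la \<open>0 \<le> C\<close> I by (intro psi_sum_le_majorant_pos) auto
    with mult_right_mono[OF K(1) \<open>0 \<le> M\<close>] show ?thesis
      by linarith
  next
    case 3
    then have "I \<le> (1 + 7 * C) * M"
      unfolding M_def 3(2) using D m x ka_la \<open>0 \<le> C\<close> I[unfolded 3(2)]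
      by (intro psi_sum_le_majorant_zero) auto
    with mult_right_mono[OF K(2) \<open>0 \<le> M\<close>] show ?thesis
      by linarith
  qed
  then show ?thesis
    by (simp add: K_def M_def)
qed

lemma abs_sum_psi_recip_le_majorant:
  assumes "exponent_pair ka la" "0 \<le> dl"
  obtains K where "0 < K"
    "\<And>m x D. 1 \<le> D \<Longrightarrow> 1 \<le> m \<Longrightarrow> real m \<le> 2 * D \<Longrightarrow> D \<le> x \<Longrightarrow>
       \<bar>\<Sum>n\<in>dyadic_cofactors m D. psi (x / (real m * real n + dl))\<bar> \<le> K * psi_sum_majorant ka la x D m"
proof -
  obtain C where "0 < C" and C: "\<And>m x D H. 1 \<le> D \<Longrightarrow> 1 \<le> m \<Longrightarrow> real m \<le> D \<Longrightarrow> 0 < x \<Longrightarrow> 1 \<le> H \<Longrightarrow>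
       \<bar>\<Sum>n\<in>dyadic_cofactors m D. psi (x / (real m * real n + dl))\<bar>
         \<le> D / real m / (2 * real H)
            + C * ((x * real m / D\<^sup>2) powr ka * (D / real m) powr la) * weight_sum_bound ka H
            + 3 * C * (D\<^sup>2 / (x * real m))"
    using abs_sum_psi_recip_le[OF assms] by blast
  have ka_la: "0 \<le> ka" "ka \<le> 1/2" "1/2 \<le> la" "la \<le> 1"
    using exponent_pair_bounds[OF assms(1)] by auto
  show ?thesis
  proof (rule that)
    show "0 < 1 + 2 * C * (1 / ka + 2) + 7 * C"
      using \<open>0 < C\<close> ka_la by (simp add: add_pos_nonneg)
  next
    fix m :: nat and x D :: real
    assume "1 \<le> D" "1 \<le> m" "real m \<le> 2 * D" "D \<le> x"
    then show "\<bar>\<Sum>n\<in>dyadic_cofactors m D. psi (x / (real m * real n + dl))\<bar>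
                 \<le> (1 + 2 * C * (1 / ka + 2) + 7 * C) * psi_sum_majorant ka la x D m"
      using ka_la \<open>0 < C\<close> by (intro psi_sum_le_majorant abs_sum_psi_le_half C) auto
  qed
qed

section \<open>The outer sum\<close>

lemma id_conv_div_eq:
  assumes "0 < d"
  shows "id_conv g d / of_nat d = (\<Sum>e | e dvd d. g (d div e) / of_nat (d div e))"
  unfolding id_conv_def sum_divide_distrib
proof (intro sum.cong refl)
  fix e assume "e \<in> {e. e dvd d}"
  then obtain k where "d = e * k"
    by auto
  with assms show "of_nat e * g (d div e) / of_nat d = g (d div e) / (of_nat (d div e) :: complex)"
    by (simp add: field_simps)
qed

lemma bij_betw_dyadic_divisor_pairs:
  assumes "1 \<le> D"
  shows "bij_betw (\<lambda>(m, n). (m * n, n)) (SIGMA m:{1..nat \<lfloor>2 * D\<rfloor>}. dyadic_cofactors m D)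
           (SIGMA d:{d. D < real d \<and> real d \<le> 2 * D}. {e. e dvd d})"
proof (rule bij_betwI')
  fix p q assume "p \<in> (SIGMA m:{1..nat \<lfloor>2 * D\<rfloor>}. dyadic_cofactors m D)"
    "q \<in> (SIGMA m:{1..nat \<lfloor>2 * D\<rfloor>}. dyadic_cofactors m D)"
  then have "0 < snd p"
    using assms by (cases "snd p") (auto simp: dyadic_cofactors_def)
  then show "((\<lambda>(m, n). (m * n, n)) p = (\<lambda>(m, n). (m * n, n)) q) = (p = q)"
    by (cases p, cases q) auto
next
  fix p assume "p \<in> (SIGMA m:{1..nat \<lfloor>2 * D\<rfloor>}. dyadic_cofactors m D)"
  then show "(\<lambda>(m, n). (m * n, n)) p \<in> (SIGMA d:{d. D < real d \<and> real d \<le> 2 * D}. {e. e dvd d})"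
    by (cases p) (auto simp: dyadic_cofactors_def)
next
  fix q assume "q \<in> (SIGMA d:{d. D < real d \<and> real d \<le> 2 * D}. {e. e dvd d})"
  then obtain d n where dn: "q = (d, n)" "n dvd d" "D < real d" "real d \<le> 2 * D"
    by auto
  from \<open>n dvd d\<close> obtain m where "d = n * m"
    by (rule dvdE)
  with dn have q: "q = (n * m, n)" "D < real (n * m)" "real (n * m) \<le> 2 * D"
    by simp_all
  then have "0 < real (n * m)"
    using assms by linarith
  then have "1 \<le> m" "1 \<le> n" "m \<le> n * m"
    by (simp_all only: of_nat_0_less_iff nat_0_less_mult_iff) auto
  moreover from \<open>m \<le> n * m\<close> q(3) have "real m \<le> 2 * D"
    by (meson of_nat_le_iff order_trans)
  ultimately have "(m, n) \<in> (SIGMA m:{1..nat \<lfloor>2 * D\<rfloor>}. dyadic_cofactors m D)"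
    using q by (auto simp: dyadic_cofactors_def le_nat_floor le_floor_iff mult.commute)
  with q show "\<exists>p\<in>(SIGMA m:{1..nat \<lfloor>2 * D\<rfloor>}. dyadic_cofactors m D). q = (\<lambda>(m, n). (m * n, n)) p"
    by (auto simp: mult.commute)
qed

lemma frakS_id_conv_eq:
  assumes "1 \<le> D"
  shows "frakS dl (id_conv g) x D = (\<Sum>m = 1..nat \<lfloor>2 * D\<rfloor>. g m / of_nat m *
           of_real (\<Sum>n\<in>dyadic_cofactors m D. psi (x / (real m * real n + dl))))"
proof -
  define F where "F = (\<lambda>(d, e). g (d div e) / of_nat (d div e) * of_real (psi (x / (real d + dl))) :: complex)"
  define Ds where "Ds = {d. D < real d \<and> real d \<le> 2 * D}"
  have "Ds \<subseteq> {..nat \<lfloor>2 * D\<rfloor>}"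
    by (auto simp: Ds_def le_nat_floor le_floor_iff)
  then have "finite Ds"
    by (rule finite_subset) simp
  have pos: "0 < d" if "d \<in> Ds" for d
    using that assms by (cases d) (auto simp: Ds_def)
  have "frakS dl (id_conv g) x D = (\<Sum>d\<in>Ds. \<Sum>e | e dvd d. F (d, e))"
    unfolding frakS_def Ds_def[symmetric] F_def
    by (intro sum.cong refl) (simp add: id_conv_div_eq[OF pos] sum_distrib_right)
  also have "\<dots> = (\<Sum>p\<in>(SIGMA d:Ds. {e. e dvd d}). F p)"
    using \<open>finite Ds\<close> pos by (subst sum.Sigma) auto
  also have "\<dots> = (\<Sum>p\<in>(SIGMA m:{1..nat \<lfloor>2 * D\<rfloor>}. dyadic_cofactors m D). F ((\<lambda>(m, n). (m * n, n)) p))"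
    using bij_betw_dyadic_divisor_pairs[OF assms] unfolding Ds_def by (rule sum.reindex_bij_betw[symmetric])
  also have "\<dots> = (\<Sum>m = 1..nat \<lfloor>2 * D\<rfloor>. \<Sum>n\<in>dyadic_cofactors m D. F (m * n, n))"
    using assms by (subst sum.Sigma) (auto simp: split_beta)
  also have "\<dots> = (\<Sum>m = 1..nat \<lfloor>2 * D\<rfloor>. \<Sum>n\<in>dyadic_cofactors m D.
                    g m / of_nat m * of_real (psi (x / (real m * real n + dl))))"
    using assms by (intro sum.cong refl) (auto simp: F_def dyadic_cofactors_def)
  finally show ?thesis
    by (simp add: sum_distrib_left)
qed

lemma psi_sum_majorant_div_eq:
  assumes "1 \<le> m"
  shows "psi_sum_majorant ka la x D m / real m =
           (x powr ka * D powr (la - ka)) powr (1 / (1 + ka)) * real m powr (- la / (1 + ka) - 1)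
           + x powr ka * D powr (la - 2 * ka) * ((if ka = 0 then 1 + ln D else 1) * real m powr (ka - la - 1))
           + D\<^sup>2 / x * real m powr (- 1 - 1)"
proof -
  have m: "0 < real m"
    using assms by simp
  have "(x powr ka * D powr (la - ka) * real m powr (- la)) powr (1 / (1 + ka))
          = (x powr ka * D powr (la - ka)) powr (1 / (1 + ka)) * real m powr (- la / (1 + ka))"
    by (simp add: powr_mult powr_powr)
  moreover have "real m powr (- la / (1 + ka) - 1) = real m powr (- la / (1 + ka)) / real m"
    "real m powr (ka - la - 1) = real m powr (ka - la) / real m"
    "real m powr (- 1 - 1) = 1 / real m / real m"
    using m by (simp_all add: powr_diff powr_minus_divide power2_eq_square)
  ultimately show ?thesis
    by (simp add: psi_sum_majorant_def add_divide_distrib mult_ac)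
qed

lemma sum_majorant_log_term_le:
  assumes "1 \<le> D" "0 \<le> ka" "ka \<le> 1/2" "1/2 \<le> la" "la \<le> 1"
  shows "(\<Sum>m = 1..nat \<lfloor>2 * D\<rfloor>. (if ka = 0 then 1 + ln D else 1) * real m powr (ka - la - 1))
           \<le> 3 * (2 + ln D)"
proof (cases "ka = 0")
  case True
  then have e: "ka - la - 1 = - 1 - la"
    by simp
  have "1 / la \<le> 2"
    using assms by (simp add: field_simps)
  have "(\<Sum>m = 1..nat \<lfloor>2 * D\<rfloor>. (if ka = 0 then 1 + ln D else 1) * real m powr (ka - la - 1))
               = (1 + ln D) * (\<Sum>m = 1..nat \<lfloor>2 * D\<rfloor>. real m powr (- 1 - la))"
    unfolding e using True by (simp add: sum_distrib_left)
  also have "\<dots> \<le> (1 + ln D) * (1 + 1 / la)"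
    using assms sum_powr_neg_le[of la "nat \<lfloor>2 * D\<rfloor>"] by (intro mult_left_mono) auto
  also have "\<dots> \<le> (1 + ln D) * 3"
    using assms \<open>1 / la \<le> 2\<close> by (intro mult_left_mono) auto
  finally show ?thesis
    by simp
next
  case False
  define M where "M = nat \<lfloor>2 * D\<rfloor>"
  have M: "1 \<le> M" "real M \<le> 2 * D"
    using assms by (auto simp: M_def le_nat_floor)
  have "(\<Sum>m = 1..M. real m powr (ka - la - 1)) \<le> (\<Sum>m = 1..M. real m powr - 1)"
    using assms by (intro sum_mono powr_mono) auto
  also have "\<dots> = (\<Sum>m = 1..M. inverse (real m))"
    by (simp add: divide_inverse)
  also have "\<dots> \<le> 1 + ln (real M)"
    using harm_le_one_plus_ln[OF M(1)] by (simp add: harm_def)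
  also have "\<dots> \<le> 1 + ln (2 * D)"
    using M by simp
  also have "\<dots> = 1 + ln 2 + ln D"
    using assms by (simp add: ln_mult)
  also have "\<dots> \<le> 3 * (2 + ln D)"
    using ln_2_less_1 ln_ge_zero[OF assms(1)] by (simp add: algebra_simps)
  finally show ?thesis
    using False by (simp add: M_def)
qed

lemma sum_psi_sum_majorant_le:
  assumes "1 \<le> D" "0 < x" "0 \<le> ka" "ka \<le> 1/2" "1/2 \<le> la" "la \<le> 1"
  shows "(\<Sum>m = 1..nat \<lfloor>2 * D\<rfloor>. psi_sum_majorant ka la x D m / real m)
           \<le> 4 * (x powr ka * D powr (la - ka)) powr (1 / (1 + ka))
             + 3 * (x powr ka * D powr (la - 2 * ka)) * (2 + ln D) + 2 * (D\<^sup>2 / x)"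
proof -
  define M where "M = nat \<lfloor>2 * D\<rfloor>"
  define W where "W = (x powr ka * D powr (la - ka)) powr (1 / (1 + ka))"
  define V where "V = x powr ka * D powr (la - 2 * ka)"
  define L where "L = (if ka = 0 then 1 + ln D else 1)"
  have e: "- la / (1 + ka) - 1 = - 1 - la / (1 + ka)"
    by simp
  have "(\<Sum>m = 1..M. real m powr (- 1 - la / (1 + ka))) \<le> 1 + 1 / (la / (1 + ka))"
    using assms by (intro sum_powr_neg_le) auto
  also have "\<dots> \<le> 4"
    using assms by (simp add: field_simps)
  finally have s1: "(\<Sum>m = 1..M. real m powr (- la / (1 + ka) - 1)) \<le> 4"
    unfolding e .
  have s2: "(\<Sum>m = 1..M. real m powr (- 1 - 1)) \<le> 2"
    using sum_powr_neg_le[of 1 M] by simp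
  have s3: "(\<Sum>m = 1..M. L * real m powr (ka - la - 1)) \<le> 3 * (2 + ln D)"
    unfolding L_def M_def using assms by (intro sum_majorant_log_term_le) auto
  have "(\<Sum>m = 1..M. psi_sum_majorant ka la x D m / real m)
          = W * (\<Sum>m = 1..M. real m powr (- la / (1 + ka) - 1))
            + V * (\<Sum>m = 1..M. L * real m powr (ka - la - 1)) + D\<^sup>2 / x * (\<Sum>m = 1..M. real m powr (- 1 - 1))"
    by (simp add: psi_sum_majorant_div_eq W_def V_def L_def sum.distrib sum_distrib_left)
  also have "\<dots> \<le> W * 4 + V * (3 * (2 + ln D)) + D\<^sup>2 / x * 2"
    using s1 s2 s3 assms by (intro add_mono mult_left_mono) (auto simp: W_def V_def)
  finally show ?thesis
    by (simp only: M_def W_def V_def mult_ac)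
qed

definition frakS_majorant :: "real \<Rightarrow> real \<Rightarrow> real \<Rightarrow> real \<Rightarrow> real" where
  "frakS_majorant ka la x D =
     (x powr ka * D powr (la - ka)) powr (1 / (1 + ka)) + x powr ka * D powr (la - 2 * ka) * ln x + D\<^sup>2 / x"

lemma one_le_balanced_term:
  fixes D x ka la :: real
  assumes "1 \<le> D" "D \<le> x" "0 \<le> ka" "ka \<le> la"
  shows "1 \<le> (x powr ka * D powr (la - ka)) powr (1 / (1 + ka))"
proof -
  have "1 \<le> x powr ka" "1 \<le> D powr (la - ka)"
    using assms by (auto intro!: ge_one_powr_ge_zero)
  then have "1 * 1 \<le> x powr ka * D powr (la - ka)"
    by (intro mult_mono) auto
  then show ?thesis
    using assms by (intro ge_one_powr_ge_zero) auto
qed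

text \<open>For \<open>x < e\<close> the logarithmic term is bounded; otherwise \<open>2 + ln D \<le> 3 ln x\<close>.\<close>

lemma log_term_le:
  fixes D x ka la :: real
  assumes "1 \<le> D" "D \<le> x" "0 \<le> ka" "ka \<le> 1/2" "1/2 \<le> la" "la \<le> 1"
  defines "V \<equiv> x powr ka * D powr (la - 2 * ka)"
  shows "3 * V * (2 + ln D) \<le> 81 + 9 * (V * ln x)"
proof -
  have "ln D \<le> ln x"
    using assms by simp
  show ?thesis
  proof (cases "exp 1 \<le> x")
    case True
    then have "1 \<le> ln x"
      using assms by (simp add: ln_ge_iff)
    with \<open>ln D \<le> ln x\<close> have "2 + ln D \<le> 3 * ln x"
      by linarith
    then have "3 * V * (2 + ln D) \<le> 3 * V * (3 * ln x)"
      by (intro mult_left_mono) (auto simp: V_def)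
    then show ?thesis
      by simp
  next
    case False
    then have "x < 3" "ln x \<le> 1"
      using exp_le assms ln_le_cancel_iff[of x "exp 1"] by simp_all
    have "V \<le> x powr 1 * D powr 1"
      unfolding V_def using assms by (intro mult_mono powr_mono) auto
    then have "V \<le> 3 * 3"
      using \<open>x < 3\<close> assms mult_mono[of x 3 D 3] by simp
    moreover have "2 + ln D \<le> 3"
      using \<open>ln x \<le> 1\<close> \<open>ln D \<le> ln x\<close> by linarith
    ultimately have "3 * V * (2 + ln D) \<le> 3 * 9 * 3"
      using assms by (intro mult_mono) (auto simp: V_def)
    moreover have "0 \<le> V * ln x"
      using assms by (simp add: V_def)
    ultimately show ?thesis
      by simp
  qed
qed

lemma sum_bound_le_frakS_majorant:
  assumes "1 \<le> D" "D \<le> x" "0 \<le> ka" "ka \<le> 1/2" "1/2 \<le> la" "la \<le> 1"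
  shows "4 * (x powr ka * D powr (la - ka)) powr (1 / (1 + ka))
           + 3 * (x powr ka * D powr (la - 2 * ka)) * (2 + ln D) + 2 * (D\<^sup>2 / x)
         \<le> 90 * frakS_majorant ka la x D"
proof -
  define W where "W = (x powr ka * D powr (la - ka)) powr (1 / (1 + ka))"
  define V where "V = x powr ka * D powr (la - 2 * ka)"
  define Y where "Y = D\<^sup>2 / x"
  have "1 \<le> W" "0 \<le> V * ln x" "0 \<le> Y"
    using one_le_balanced_term[of D x ka la] assms by (auto simp: W_def V_def Y_def)
  with log_term_le[OF assms] show ?thesis
    unfolding frakS_majorant_def W_def[symmetric] V_def[symmetric] Y_def[symmetric] by simp
qed

lemma frakS_id_conv_le:
  assumes "exponent_pair ka la" "0 \<le> dl"
  obtains K where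
    "\<And>g B x D. (\<And>m. 1 \<le> m \<Longrightarrow> real m \<le> 2 * D \<Longrightarrow> cmod (g m) \<le> B) \<Longrightarrow> 1 \<le> D \<Longrightarrow> D \<le> x \<Longrightarrow>
       cmod (frakS dl (id_conv g) x D) \<le> K * B * frakS_majorant ka la x D"
proof -
  obtain K where "0 < K" and K: "\<And>m x D. 1 \<le> D \<Longrightarrow> 1 \<le> m \<Longrightarrow> real m \<le> 2 * D \<Longrightarrow> D \<le> x \<Longrightarrow>
       \<bar>\<Sum>n\<in>dyadic_cofactors m D. psi (x / (real m * real n + dl))\<bar> \<le> K * psi_sum_majorant ka la x D m"
    using abs_sum_psi_recip_le_majorant[OF assms] by blast
  have ka_la: "0 \<le> ka" "ka \<le> 1/2" "1/2 \<le> la" "la \<le> 1"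
    using exponent_pair_bounds[OF assms(1)] by auto
  show ?thesis
  proof (rule that)
    fix g :: "nat \<Rightarrow> complex" and B x D :: real
    assume g: "\<And>m. 1 \<le> m \<Longrightarrow> real m \<le> 2 * D \<Longrightarrow> cmod (g m) \<le> B" and D: "1 \<le> D" "D \<le> x"
    define M where "M = nat \<lfloor>2 * D\<rfloor>"
    have "real M \<le> 2 * D"
      unfolding M_def using D by (intro of_nat_floor) auto
    then have m: "1 \<le> m" "real m \<le> 2 * D" if "m \<in> {1..M}" for m
      using that by auto
    have "0 \<le> B"
      using g[of 1] D norm_ge_zero[of "g 1"] by linarith
    have "cmod (frakS dl (id_conv g) x D)
            \<le> (\<Sum>m = 1..M. cmod (g m / of_nat m *
                 of_real (\<Sum>n\<in>dyadic_cofactors m D. psi (x / (real m * real n + dl)))))"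
      unfolding frakS_id_conv_eq[OF D(1)] M_def by (rule norm_sum)
    also have "\<dots> \<le> (\<Sum>m = 1..M. B * K * (psi_sum_majorant ka la x D m / real m))"
      unfolding of_real_sum[symmetric]
    proof (rule sum_mono)
      fix m assume "m \<in> {1..M}"
      define I where "I = (\<Sum>n\<in>dyadic_cofactors m D. psi (x / (real m * real n + dl)))"
      have "cmod (g m) * \<bar>I\<bar> \<le> B * (K * psi_sum_majorant ka la x D m)"
        unfolding I_def using g m K D \<open>m \<in> {1..M}\<close> \<open>0 \<le> B\<close> by (intro mult_mono) auto
      then show "cmod (g m / of_nat m * of_real I) \<le> B * K * (psi_sum_majorant ka la x D m / real m)"
        by (simp add: norm_mult norm_divide divide_right_mono mult_ac)
    qed
    also have "\<dots> = B * K * (\<Sum>m = 1..M. psi_sum_majorant ka la x D m / real m)"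
      by (simp add: sum_distrib_left)
    also have "\<dots> \<le> B * K * (90 * frakS_majorant ka la x D)"
      using sum_psi_sum_majorant_le[of D x ka la] sum_bound_le_frakS_majorant[of D x ka la]
        D ka_la \<open>0 \<le> B\<close> \<open>0 < K\<close>
      by (intro mult_left_mono) (auto simp: M_def)
    finally show "cmod (frakS dl (id_conv g) x D) \<le> 90 * K * B * frakS_majorant ka la x D"
      by (simp add: mult_ac)
  qed
qed

lemma frakS_id_conv_le_of_bounded:
  assumes "exponent_pair ka la" "0 \<le> dl" "\<forall>n\<ge>1. cmod (g n) \<le> B"
  shows "\<exists>C. \<forall>x D. 1 \<le> D \<longrightarrow> D \<le> x \<longrightarrow> cmod (frakS dl (id_conv g) x D) \<le> C * frakS_majorant ka la x D"
proof -
  obtain K where "\<And>x D. 1 \<le> D \<Longrightarrow> D \<le> x \<Longrightarrow> cmod (frakS dl (id_conv g) x D) \<le> K * B * frakS_majorant ka la x D"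
    using frakS_id_conv_le[OF assms(1,2)] assms(3) by metis
  then show ?thesis
    by blast
qed

lemma frakS_id_conv_le_of_powr_bounded:
  assumes "exponent_pair ka la" "0 \<le> dl" "\<forall>n\<ge>1. cmod (g n) \<le> B * real n powr eps" "0 < eps"
  shows "\<exists>C. \<forall>x D. 1 \<le> D \<longrightarrow> D \<le> x \<longrightarrow>
           cmod (frakS dl (id_conv g) x D) \<le> C * D powr eps * frakS_majorant ka la x D"
proof -
  have "cmod (g 1) \<le> B"
    using assms(3) by force
  then have "0 \<le> B"
    using norm_ge_zero order_trans by blast
  have g: "cmod (g m) \<le> B * 2 powr eps * D powr eps" if "1 \<le> D" "1 \<le> m" "real m \<le> 2 * D" for m D
  proof -
    have "cmod (g m) \<le> B * real m powr eps"
      using assms(3) that by simp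
    also have "\<dots> \<le> B * (2 * D) powr eps"
      using that assms(4) \<open>0 \<le> B\<close> by (intro mult_left_mono powr_mono2) auto
    finally show ?thesis
      using that by (simp add: powr_mult mult_ac)
  qed
  obtain K where "\<And>x D. 1 \<le> D \<Longrightarrow> D \<le> x \<Longrightarrow>
      cmod (frakS dl (id_conv g) x D) \<le> K * (B * 2 powr eps * D powr eps) * frakS_majorant ka la x D"
    using frakS_id_conv_le[OF assms(1,2)] g by metis
  then have "\<forall>x D. 1 \<le> D \<longrightarrow> D \<le> x \<longrightarrow>
      cmod (frakS dl (id_conv g) x D) \<le> K * B * 2 powr eps * D powr eps * frakS_majorant ka la x D"
    by (simp add: mult_ac)
  then show ?thesis
    by blast
qed

theorem proposition3p1:
  fixes g :: "nat \<Rightarrow> complex" and dl ka la :: real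
  assumes "dl \<ge> 0" and "exponent_pair ka la"
  shows "((\<exists>B. \<forall>n\<ge>1. cmod (g n) \<le> B) \<longrightarrow>
           (\<exists>C. \<forall>x D. 1 \<le> D \<longrightarrow> D \<le> x \<longrightarrow>
              cmod (frakS dl (id_conv g) x D)
                \<le> C * ((x powr ka * D powr (la - ka)) powr (1 / (1 + ka))
                       + x powr ka * D powr (la - 2 * ka) * ln x + D\<^sup>2 / x)))
       \<and> ((\<forall>eps>0. \<exists>B. \<forall>n\<ge>1. cmod (g n) \<le> B * real n powr eps) \<longrightarrow>
           (\<forall>eps>0. \<exists>C. \<forall>x D. 1 \<le> D \<longrightarrow> D \<le> x \<longrightarrow>
              cmod (frakS dl (id_conv g) x D)
                \<le> C * D powr eps * ((x powr ka * D powr (la - ka)) powr (1 / (1 + ka))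
                       + x powr ka * D powr (la - 2 * ka) * ln x + D\<^sup>2 / x)))"
  unfolding frakS_majorant_def[symmetric]
  using frakS_id_conv_le_of_bounded[OF assms(2,1)] frakS_id_conv_le_of_powr_bounded[OF assms(2,1)]
  by blast

end
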